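(* Let $A=kQ/I$ be a string algebra and let $M$ be an indecomposable string module whose string is a directed string (a path of $Q$ not lying in $I$, possibly of length zero). Then $\mho_1(M)\cong D_1\oplus D_2$, where each of $D_1$, $D_2$ is either zero or a string module whose string is a directed string.
   Context: Conventions: $k$ is a field, $Q$ a finite connected quiver, arrows composed left to right, modules are finite-dimensional right $A$-modules. String algebra: $A=kQ/I$ with $I$ admissible such that (1) each vertex is the start of at most two arrows and the end of at most two arrows; (2) for each arrow $\beta$ at most one arrow $\gamma$ has $\beta\gamma\notin I$; (3) for each arrow $\beta$ at most one arrow $\alpha$ has $\alpha\beta\notin I$; (4) $I$ is generated by paths of length $\ge 2$. For a path $p$ of $Q$ not in $I$ from $x$ to $y$ (possibly trivial, $x=y$), the corresponding string module is the uniserial module with top $S(x)$, socle $S(y)$ and composition factors the simples at the vertices of $p$; such a module is said to correspond to a directed string. Cosyzygy: $\mho_1(M)=E_0(M)/M$, where $M\to E_0(M)$ is an injective envelope. *)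

theory Defs
  imports Main
begin

record ('q,'a) quiver =
  verts :: "'q set"
  arrs  :: "'a set"
  src   :: "'a \<Rightarrow> 'q"
  tgt   :: "'a \<Rightarrow> 'q"

text \<open>Paths are lists of arrows, composed left to right. A path from x (possibly trivial).\<close>
definition is_path :: "('q,'a) quiver \<Rightarrow> 'q \<Rightarrow> 'a list \<Rightarrow> bool" where
  "is_path Q x ps \<longleftrightarrow> x \<in> verts Q \<and> set ps \<subseteq> arrs Q
     \<and> (ps \<noteq> [] \<longrightarrow> src Q (hd ps) = x)
     \<and> (\<forall>i. Suc i < length ps \<longrightarrow> tgt Q (ps ! i) = src Q (ps ! Suc i))"

definition is_npath :: "('q,'a) quiver \<Rightarrow> 'a list \<Rightarrow> bool" where
  "is_npath Q ps \<longleftrightarrow> ps \<noteq> [] \<and> is_path Q (src Q (hd ps)) ps"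

definition path_vertex :: "('q,'a) quiver \<Rightarrow> 'q \<Rightarrow> 'a list \<Rightarrow> nat \<Rightarrow> 'q" where
  "path_vertex Q x ps i = (if i = 0 then x else tgt Q (ps ! (i - 1)))"

definition finite_quiver :: "('q,'a) quiver \<Rightarrow> bool" where
  "finite_quiver Q \<longleftrightarrow> finite (verts Q) \<and> finite (arrs Q) \<and> verts Q \<noteq> {}
     \<and> (\<forall>a\<in>arrs Q. src Q a \<in> verts Q \<and> tgt Q a \<in> verts Q)"

definition connected_quiver :: "('q,'a) quiver \<Rightarrow> bool" where
  "connected_quiver Q \<longleftrightarrow> (\<forall>x\<in>verts Q. \<forall>y\<in>verts Q.
     (x, y) \<in> ({(src Q a, tgt Q a) | a. a \<in> arrs Q} \<union> {(tgt Q a, src Q a) | a. a \<in> arrs Q})\<^sup>*)"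

text \<open>An admissible ideal generated by paths is spanned by the paths it contains;
  we represent it by this set R of (nonempty) paths, which is closed under
  composition with arbitrary paths on both sides.\<close>
definition admissible_monomial :: "('q,'a) quiver \<Rightarrow> 'a list set \<Rightarrow> bool" where
  "admissible_monomial Q R \<longleftrightarrow>
     R \<subseteq> {ps. is_npath Q ps \<and> 2 \<le> length ps}
     \<and> (\<forall>p\<in>R. \<forall>u w. is_npath Q (u @ p @ w) \<longrightarrow> u @ p @ w \<in> R)
     \<and> (\<exists>N. \<forall>ps. is_npath Q ps \<and> N \<le> length ps \<longrightarrow> ps \<in> R)"

definition string_algebra :: "('q,'a) quiver \<Rightarrow> 'a list set \<Rightarrow> bool" where
  "string_algebra Q R \<longleftrightarrow> finite_quiver Q \<and> connected_quiver Q \<and> admissible_monomial Q R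
     \<and> (\<forall>x\<in>verts Q. card {a\<in>arrs Q. src Q a = x} \<le> 2 \<and> card {a\<in>arrs Q. tgt Q a = x} \<le> 2)
     \<and> (\<forall>b\<in>arrs Q. card {g\<in>arrs Q. src Q g = tgt Q b \<and> [b, g] \<notin> R} \<le> 1)
     \<and> (\<forall>b\<in>arrs Q. card {a\<in>arrs Q. tgt Q a = src Q b \<and> [a, b] \<notin> R} \<le> 1)"

section \<open>Representations (= finite-dimensional right modules over kQ/I)\<close>

text \<open>The space at vertex x has coordinates indexed by the finite set bas V x;
  arrow a acts by the matrix mat V a (entry j i: from coordinate i at src to j at tgt).\<close>
record ('q,'a,'k) rep =
  bas :: "'q \<Rightarrow> nat set"
  mat :: "'a \<Rightarrow> nat \<Rightarrow> nat \<Rightarrow> 'k"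

definition space :: "('q,'a,'k::field) rep \<Rightarrow> 'q \<Rightarrow> (nat \<Rightarrow> 'k) set" where
  "space V x = {v. \<forall>i. i \<notin> bas V x \<longrightarrow> v i = 0}"

definition act :: "('q,'a) quiver \<Rightarrow> ('q,'a,'k::field) rep \<Rightarrow> 'a \<Rightarrow> (nat \<Rightarrow> 'k) \<Rightarrow> (nat \<Rightarrow> 'k)" where
  "act Q V a v = (\<lambda>j. if j \<in> bas V (tgt Q a) then (\<Sum>i\<in>bas V (src Q a). mat V a j i * v i) else 0)"

definition act_path :: "('q,'a) quiver \<Rightarrow> ('q,'a,'k::field) rep \<Rightarrow> 'a list \<Rightarrow> (nat \<Rightarrow> 'k) \<Rightarrow> (nat \<Rightarrow> 'k)" where
  "act_path Q V ps v = fold (act Q V) ps v"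

definition is_rep :: "('q,'a) quiver \<Rightarrow> 'a list set \<Rightarrow> ('q,'a,'k::field) rep \<Rightarrow> bool" where
  "is_rep Q R V \<longleftrightarrow> (\<forall>x. finite (bas V x)) \<and> (\<forall>x. x \<notin> verts Q \<longrightarrow> bas V x = {})
     \<and> (\<forall>p\<in>R. \<forall>v\<in>space V (src Q (hd p)). act_path Q V p v = (\<lambda>_. 0))"

definition app :: "('q,'a,'k::field) rep \<Rightarrow> ('q,'a,'k) rep \<Rightarrow> ('q \<Rightarrow> nat \<Rightarrow> nat \<Rightarrow> 'k)
    \<Rightarrow> 'q \<Rightarrow> (nat \<Rightarrow> 'k) \<Rightarrow> (nat \<Rightarrow> 'k)" where
  "app V W F x v = (\<lambda>j. if j \<in> bas W x then (\<Sum>i\<in>bas V x. F x j i * v i) else 0)"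

definition is_hom :: "('q,'a) quiver \<Rightarrow> ('q,'a,'k::field) rep \<Rightarrow> ('q,'a,'k) rep
    \<Rightarrow> ('q \<Rightarrow> nat \<Rightarrow> nat \<Rightarrow> 'k) \<Rightarrow> bool" where
  "is_hom Q V W F \<longleftrightarrow> (\<forall>a\<in>arrs Q. \<forall>v\<in>space V (src Q a).
     app V W F (tgt Q a) (act Q V a v) = act Q W a (app V W F (src Q a) v))"

definition hom_mono :: "('q,'a) quiver \<Rightarrow> ('q,'a,'k::field) rep \<Rightarrow> ('q,'a,'k) rep
    \<Rightarrow> ('q \<Rightarrow> nat \<Rightarrow> nat \<Rightarrow> 'k) \<Rightarrow> bool" where
  "hom_mono Q V W F \<longleftrightarrow> (\<forall>x\<in>verts Q. inj_on (app V W F x) (space V x))"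

definition hom_epi :: "('q,'a) quiver \<Rightarrow> ('q,'a,'k::field) rep \<Rightarrow> ('q,'a,'k) rep
    \<Rightarrow> ('q \<Rightarrow> nat \<Rightarrow> nat \<Rightarrow> 'k) \<Rightarrow> bool" where
  "hom_epi Q V W F \<longleftrightarrow> (\<forall>x\<in>verts Q. app V W F x ` space V x = space W x)"

definition isomorphic :: "('q,'a) quiver \<Rightarrow> ('q,'a,'k::field) rep \<Rightarrow> ('q,'a,'k) rep \<Rightarrow> bool" where
  "isomorphic Q V W \<longleftrightarrow> (\<exists>F. is_hom Q V W F \<and> hom_mono Q V W F \<and> hom_epi Q V W F)"

definition zero_rep :: "('q,'a) quiver \<Rightarrow> ('q,'a,'k::field) rep \<Rightarrow> bool" where
  "zero_rep Q V \<longleftrightarrow> (\<forall>x\<in>verts Q. bas V x = {})"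

definition dsum :: "('q,'a,'k::field) rep \<Rightarrow> ('q,'a,'k) rep \<Rightarrow> ('q,'a,'k) rep" where
  "dsum V W = \<lparr> bas = (\<lambda>x. (\<lambda>i. 2 * i) ` bas V x \<union> (\<lambda>i. 2 * i + 1) ` bas W x),
                mat = (\<lambda>a j i. if even j \<and> even i then mat V a (j div 2) (i div 2)
                              else if odd j \<and> odd i then mat W a (j div 2) (i div 2) else 0) \<rparr>"

definition injective_rep :: "('q,'a) quiver \<Rightarrow> 'a list set \<Rightarrow> ('q,'a,'k::field) rep \<Rightarrow> bool" where
  "injective_rep Q R E \<longleftrightarrow> is_rep Q R E \<and>
     (\<forall>X Y f g. is_rep Q R X \<and> is_rep Q R Y \<and> is_hom Q X Y f \<and> hom_mono Q X Y f \<and> is_hom Q X E g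
        \<longrightarrow> (\<exists>h. is_hom Q Y E h \<and>
               (\<forall>x\<in>verts Q. \<forall>v\<in>space X x. app Y E h x (app X Y f x v) = app X E g x v)))"

definition subrep :: "('q,'a) quiver \<Rightarrow> ('q,'a,'k::field) rep \<Rightarrow> ('q \<Rightarrow> (nat \<Rightarrow> 'k) set) \<Rightarrow> bool" where
  "subrep Q E U \<longleftrightarrow> (\<forall>x\<in>verts Q. U x \<subseteq> space E x \<and> (\<lambda>_. 0) \<in> U x
       \<and> (\<forall>u\<in>U x. \<forall>w\<in>U x. (\<lambda>i. u i + w i) \<in> U x)
       \<and> (\<forall>c. \<forall>u\<in>U x. (\<lambda>i. c * u i) \<in> U x))
     \<and> (\<forall>a\<in>arrs Q. \<forall>u\<in>U (src Q a). act Q E a u \<in> U (tgt Q a))"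

definition essential_mono :: "('q,'a) quiver \<Rightarrow> ('q,'a,'k::field) rep \<Rightarrow> ('q,'a,'k) rep
    \<Rightarrow> ('q \<Rightarrow> nat \<Rightarrow> nat \<Rightarrow> 'k) \<Rightarrow> bool" where
  "essential_mono Q M E i \<longleftrightarrow> is_hom Q M E i \<and> hom_mono Q M E i \<and>
     (\<forall>U. subrep Q E U \<and> (\<exists>x\<in>verts Q. \<exists>u\<in>U x. u \<noteq> (\<lambda>_. 0)) \<longrightarrow>
        (\<exists>x\<in>verts Q. \<exists>u\<in>U x. u \<noteq> (\<lambda>_. 0) \<and> u \<in> app M E i x ` space M x))"

definition injective_envelope :: "('q,'a) quiver \<Rightarrow> 'a list set \<Rightarrow> ('q,'a,'k::field) rep
    \<Rightarrow> ('q,'a,'k) rep \<Rightarrow> ('q \<Rightarrow> nat \<Rightarrow> nat \<Rightarrow> 'k) \<Rightarrow> bool" where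
  "injective_envelope Q R M E i \<longleftrightarrow> injective_rep Q R E \<and> essential_mono Q M E i"

definition string_rep :: "('q,'a) quiver \<Rightarrow> 'q \<Rightarrow> 'a list \<Rightarrow> ('q,'a,'k::field) rep" where
  "string_rep Q x ps = \<lparr> bas = (\<lambda>y. {i. i \<le> length ps \<and> path_vertex Q x ps i = y}),
     mat = (\<lambda>a j i. if i < length ps \<and> ps ! i = a \<and> j = Suc i then 1 else 0) \<rparr>"

definition directed_string_module :: "('q,'a) quiver \<Rightarrow> 'a list set \<Rightarrow> ('q,'a,'k::field) rep \<Rightarrow> bool" where
  "directed_string_module Q R D \<longleftrightarrow>
     (\<exists>x ps. is_path Q x ps \<and> ps \<notin> R \<and> isomorphic Q D (string_rep Q x ps))"

end

theory Submission
  imports Defs "HOL-Library.Function_Algebras" "HOL.Vector_Spaces"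
begin

(* M is the string module of a path pth ending at y, so its socle is S(y) and its injective
   envelope is the indecomposable injective I(y).  We model I(y) concretely by a representation J
   whose basis is the set P of paths ending at y that avoid the relations (the trivial path
   included), an arrow a sending the basis vector of a # q to that of q.

   The envelope E is isomorphic to J: a linear functional on E_y extending "coefficient of the
   trivial path" gives a morphism E -> J restricting to the embedding of M; it is injective since
   M is essential in E, and surjective because, by injectivity of E, every basis vector of J lies
   in its image (induction on the length of the path).  Inside J, M is spanned by the suffixes of
   pth.  By the string algebra axioms two paths in P with the same last arrow are suffixes of each
   other, and at most two arrows end at y, so the remaining basis paths form at most two chains of
   suffixes of maximal paths.  Each chain spans a directed string module, and E/M = J/M is their
   direct sum. *)

definition unit_vec :: "nat \<Rightarrow> nat \<Rightarrow> 'k::field" where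
  "unit_vec l = (\<lambda>j. if j = l then 1 else 0)"

lemma app_in_space: "app V W F x v \<in> space W x"
  by (simp add: app_def space_def)

lemma act_in_space: "act Q V a v \<in> space V (tgt Q a)"
  by (simp add: act_def space_def)

lemma app_outside: "j \<notin> bas W x \<Longrightarrow> app V W F x v j = 0"
  by (simp add: app_def)

lemma act_outside: "j \<notin> bas V (tgt Q a) \<Longrightarrow> act Q V a v j = 0"
  by (simp add: act_def)

lemma space_zero: "(\<lambda>_. 0) \<in> space V x"
  by (simp add: space_def)

lemma space_add: "u \<in> space V x \<Longrightarrow> w \<in> space V x \<Longrightarrow> (\<lambda>i. u i + w i) \<in> space V x"
  by (simp add: space_def)

lemma space_diff: "u \<in> space V x \<Longrightarrow> w \<in> space V x \<Longrightarrow> (\<lambda>i. u i - w i) \<in> space V x"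
  by (simp add: space_def)

lemma space_scale: "u \<in> space V x \<Longrightarrow> (\<lambda>i. c * u i) \<in> space V x"
  by (simp add: space_def)

lemma space_sum: "(\<And>l. l \<in> L \<Longrightarrow> f l \<in> space V x) \<Longrightarrow> (\<lambda>i. \<Sum>l\<in>L. f l i) \<in> space V x"
  by (simp add: space_def)

lemma unit_vec_in_space: "l \<in> bas V x \<Longrightarrow> unit_vec l \<in> space V x"
  by (auto simp add: space_def unit_vec_def)

lemma unit_vec_expansion:
  "finite (bas V x) \<Longrightarrow> v \<in> space V x \<Longrightarrow> v = (\<lambda>j. \<Sum>l\<in>bas V x. v l * unit_vec l j)"
  unfolding space_def unit_vec_def
  by (auto simp: fun_eq_iff if_distrib sum.delta cong: if_cong)

lemma app_sum: "app V W F x (\<lambda>i. \<Sum>l\<in>L. f l i) = (\<lambda>j. \<Sum>l\<in>L. app V W F x (f l) j)"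
  by (auto simp add: app_def fun_eq_iff sum_distrib_left intro: sum.swap)

lemma app_add: "app V W F x (\<lambda>i. u i + w i) = (\<lambda>j. app V W F x u j + app V W F x w j)"
  by (auto simp add: app_def fun_eq_iff distrib_left sum.distrib)

lemma app_diff: "app V W F x (\<lambda>i. u i - w i) = (\<lambda>j. app V W F x u j - app V W F x w j)"
  by (auto simp add: app_def fun_eq_iff right_diff_distrib sum_subtractf)

lemma app_scale: "app V W F x (\<lambda>i. c * u i) = (\<lambda>j. c * app V W F x u j)"
  by (auto simp add: app_def fun_eq_iff sum_distrib_left algebra_simps)

lemma app_zero: "app V W F x (\<lambda>_. 0) = (\<lambda>_. 0)"
  by (auto simp add: app_def fun_eq_iff)

lemma app_sum_scale:
  "app V W F x (\<lambda>i. \<Sum>l\<in>L. c l * f l i) = (\<lambda>j. \<Sum>l\<in>L. c l * app V W F x (f l) j)"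
  by (simp add: app_sum app_scale)

lemma app_app:
  "app W U G x (app V W F x v) = app V U (\<lambda>x k i. \<Sum>j\<in>bas W x. G x k j * F x j i) x v"
  by (auto simp add: app_def fun_eq_iff sum_distrib_left sum_distrib_right mult.assoc
      intro: sum.swap)

lemma act_sum: "act Q V a (\<lambda>i. \<Sum>l\<in>L. f l i) = (\<lambda>j. \<Sum>l\<in>L. act Q V a (f l) j)"
  by (auto simp add: act_def fun_eq_iff sum_distrib_left intro: sum.swap)

lemma act_scale: "act Q V a (\<lambda>i. c * u i) = (\<lambda>j. c * act Q V a u j)"
  by (auto simp add: act_def fun_eq_iff sum_distrib_left algebra_simps)

lemma act_zero: "act Q V a (\<lambda>_. 0) = (\<lambda>_. 0)"
  by (auto simp add: act_def fun_eq_iff)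

lemma act_path_Nil [simp]: "act_path Q V [] v = v"
  by (simp add: act_path_def)

lemma act_path_Cons [simp]: "act_path Q V (a # p) v = act_path Q V p (act Q V a v)"
  by (simp add: act_path_def)

lemma act_path_snoc: "act_path Q V (p @ [a]) v = act Q V a (act_path Q V p v)"
  by (simp add: act_path_def)

lemma act_path_sum:
  "act_path Q V p (\<lambda>i. \<Sum>l\<in>L. f l i) = (\<lambda>j. \<Sum>l\<in>L. act_path Q V p (f l) j)"
  by (induction p arbitrary: f) (simp_all add: act_sum)

lemma act_path_scale: "act_path Q V p (\<lambda>i. c * u i) = (\<lambda>j. c * act_path Q V p u j)"
  by (induction p arbitrary: u) (simp_all add: act_scale)

lemma act_path_zero: "act_path Q V p (\<lambda>_. 0) = (\<lambda>_. 0)"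
  by (induction p) (simp_all add: act_zero)

definition scale_fun :: "'k::field \<Rightarrow> (nat \<Rightarrow> 'k) \<Rightarrow> (nat \<Rightarrow> 'k)" where
  "scale_fun c v = (\<lambda>i. c * v i)"

lemma vector_space_scale_fun: "vector_space (scale_fun :: 'k::field \<Rightarrow> _)"
  by unfold_locales (auto simp: scale_fun_def fun_eq_iff algebra_simps)

lemma linear_left_inverse_exists:
  fixes L :: "(nat \<Rightarrow> 'k::field) \<Rightarrow> (nat \<Rightarrow> 'k)" and V :: "(nat \<Rightarrow> 'k) set"
  assumes add: "\<And>u w. L (\<lambda>i. u i + w i) = (\<lambda>i. L u i + L w i)"
    and scale: "\<And>c u. L (\<lambda>i. c * u i) = (\<lambda>i. c * L u i)"
    and V0: "(\<lambda>_. 0) \<in> V" and Vadd: "\<And>u w. u \<in> V \<Longrightarrow> w \<in> V \<Longrightarrow> (\<lambda>i. u i + w i) \<in> V"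
    and Vscale: "\<And>c u. u \<in> V \<Longrightarrow> (\<lambda>i. c * u i) \<in> V"
    and inj: "inj_on L V"
  shows "\<exists>G. (\<forall>u w. G (\<lambda>i. u i + w i) = (\<lambda>i. G u i + G w i))
           \<and> (\<forall>c u. G (\<lambda>i. c * u i) = (\<lambda>i. c * G u i)) \<and> (\<forall>v\<in>V. G (L v) = v)"
proof -
  interpret vector_space_pair "scale_fun :: 'k \<Rightarrow> _" "scale_fun :: 'k \<Rightarrow> _"
    unfolding vector_space_pair_def using vector_space_scale_fun by auto
  have lin: "Vector_Spaces.linear scale_fun scale_fun L"
    unfolding Vector_Spaces.linear_def module_hom_def module_hom_axioms_def
    using vector_space_scale_fun add scale module_iff_vector_space[of "scale_fun::'k\<Rightarrow>_"]
    by (auto simp: scale_fun_def plus_fun_def vector_space_def fun_eq_iff algebra_simps)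
  have "vs1.subspace V"
    unfolding vs1.subspace_def using V0 Vadd Vscale
    by (auto simp: scale_fun_def plus_fun_def zero_fun_def)
  from linear_exists_left_inverse_on[OF lin this inj] obtain G where
    G: "Vector_Spaces.linear scale_fun scale_fun G" "\<forall>v\<in>V. G (L v) = v" by blast
  interpret G: Vector_Spaces.linear scale_fun scale_fun G by (rule G(1))
  show ?thesis
    using G.add[unfolded plus_fun_def] G.scale[unfolded scale_fun_def] G(2) by blast
qed

lemma additive_sum:
  fixes G :: "(nat \<Rightarrow> 'k::field) \<Rightarrow> (nat \<Rightarrow> 'k)"
  assumes add: "\<And>u w. G (\<lambda>i. u i + w i) = (\<lambda>i. G u i + G w i)"
    and scale: "\<And>c u. G (\<lambda>i. c * u i) = (\<lambda>i. c * G u i)"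
    and fin: "finite L"
  shows "G (\<lambda>i. \<Sum>l\<in>L. f l i) = (\<lambda>j. \<Sum>l\<in>L. G (f l) j)"
  using fin
proof (induction L rule: finite_induct)
  case empty
  have "G (\<lambda>i. 0 * (\<lambda>_. 0::'k) i) = (\<lambda>i. 0 * G (\<lambda>_. 0) i)" by (rule scale)
  then show ?case by simp
next
  case (insert x F)
  have "G (\<lambda>i. \<Sum>l\<in>insert x F. f l i) = G (\<lambda>i. f x i + (\<Sum>l\<in>F. f l i))" using insert by simp
  also have "\<dots> = (\<lambda>j. G (f x) j + G (\<lambda>i. \<Sum>l\<in>F. f l i) j)" by (rule add)
  finally show ?case using insert by simp
qed

definition null_rep :: "('q,'a,'k::field) rep" where
  "null_rep = \<lparr> bas = (\<lambda>_. {}), mat = (\<lambda>_ _ _. 0) \<rparr>"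

lemma null_rep_is_rep:
  assumes "[] \<notin> R"
  shows "is_rep Q R (null_rep :: ('q,'a,'k::field) rep)"
  unfolding is_rep_def
proof (intro conjI ballI allI impI)
  fix r :: "'a list" and v assume "r \<in> R"
  with assms obtain a r' where "r = a # r'" by (cases r) auto
  moreover have "act Q (null_rep :: ('q,'a,'k) rep) a v = (\<lambda>_. 0)"
    by (simp add: act_def null_rep_def)
  ultimately show "act_path Q (null_rep :: ('q,'a,'k) rep) r v = (\<lambda>_. 0)"
    by (simp add: act_path_zero)
qed (auto simp: null_rep_def)

lemma zero_rep_null_rep: "zero_rep Q null_rep"
  by (simp add: zero_rep_def null_rep_def)

lemma isomorphic_refl:
  fixes V :: "('q,'a,'k::field) rep"
  assumes "\<forall>x. finite (bas V x)"
  shows "isomorphic Q V V"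
proof -
  let ?F = "\<lambda>(x::'q) (j::nat) (i::nat). if j = i then (1::'k) else 0"
  have id: "app V V ?F x v = v" if v: "v \<in> space V x" for x v
  proof -
    have "\<And>j. (\<Sum>i\<in>bas V x. ?F x j i * v i) = (\<Sum>i\<in>bas V x. if i = j then v j else 0)"
      by (rule sum.cong) auto
    then show "app V V ?F x v = v"
      using v assms by (auto simp: app_def space_def fun_eq_iff sum.delta)
  qed
  have "is_hom Q V V ?F" unfolding is_hom_def using id act_in_space by metis
  moreover have "hom_mono Q V V ?F" unfolding hom_mono_def using id by (simp add: inj_on_def)
  moreover have "hom_epi Q V V ?F" unfolding hom_epi_def using id by (auto simp: image_def)
  ultimately show ?thesis unfolding isomorphic_def by blast
qed

definition hom_comp :: "('q,'a,'k::field) rep \<Rightarrow> ('q \<Rightarrow> nat \<Rightarrow> nat \<Rightarrow> 'k)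
    \<Rightarrow> ('q \<Rightarrow> nat \<Rightarrow> nat \<Rightarrow> 'k) \<Rightarrow> ('q \<Rightarrow> nat \<Rightarrow> nat \<Rightarrow> 'k)" where
  "hom_comp W G F = (\<lambda>x k i. \<Sum>j\<in>bas W x. G x k j * F x j i)"

lemma app_hom_comp: "app V U (hom_comp W G F) x v = app W U G x (app V W F x v)"
  by (simp add: hom_comp_def app_app)

lemma is_hom_comp:
  assumes "is_hom Q V W F" "is_hom Q W U G"
  shows "is_hom Q V U (hom_comp W G F)"
  unfolding is_hom_def
proof (intro ballI)
  fix a v
  assume a: "a \<in> arrs Q" and v: "v \<in> space V (src Q a)"
  have "app V U (hom_comp W G F) (tgt Q a) (act Q V a v)
      = app W U G (tgt Q a) (act Q W a (app V W F (src Q a) v))"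
    using assms(1) a v by (simp add: app_hom_comp is_hom_def)
  also have "\<dots> = act Q U a (app W U G (src Q a) (app V W F (src Q a) v))"
    using assms(2) a app_in_space[of V W F "src Q a" v] unfolding is_hom_def by blast
  finally show "app V U (hom_comp W G F) (tgt Q a) (act Q V a v)
      = act Q U a (app V U (hom_comp W G F) (src Q a) v)"
    by (simp add: app_hom_comp)
qed

lemma hom_mono_comp:
  assumes "hom_mono Q V W F" "hom_mono Q W U G"
  shows "hom_mono Q V U (hom_comp W G F)"
  unfolding hom_mono_def app_hom_comp
proof (intro ballI)
  fix z
  assume "z \<in> verts Q"
  then have "inj_on (app V W F z) (space V z)" "inj_on (app W U G z) (space W z)"
    using assms by (simp_all add: hom_mono_def)
  moreover have "app V W F z v \<in> space W z" for v by (rule app_in_space)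
  ultimately show "inj_on (\<lambda>v. app W U G z (app V W F z v)) (space V z)"
    unfolding inj_on_def by blast
qed

lemma hom_epi_comp:
  assumes "hom_epi Q V W F" "hom_epi Q W U G"
  shows "hom_epi Q V U (hom_comp W G F)"
  unfolding hom_epi_def app_hom_comp
proof (intro ballI)
  fix z
  assume "z \<in> verts Q"
  then have "app V W F z ` space V z = space W z" "app W U G z ` space W z = space U z"
    using assms by (simp_all add: hom_epi_def)
  moreover have "(\<lambda>v. app W U G z (app V W F z v)) ` space V z = app W U G z ` app V W F z ` space V z"
    by (rule image_image[symmetric])
  ultimately show "(\<lambda>v. app W U G z (app V W F z v)) ` space V z = space U z" by simp
qed

lemma image_app_sum_scale:
  assumes L: "finite L" and f: "\<And>l. l \<in> L \<Longrightarrow> f l \<in> app V W F z ` space V z"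
  shows "(\<lambda>i. \<Sum>l\<in>L. c l * f l i) \<in> app V W F z ` space V z"
proof -
  have "\<forall>l\<in>L. \<exists>e. e \<in> space V z \<and> app V W F z e = f l"
  proof
    fix l
    assume "l \<in> L"
    then obtain e where "e \<in> space V z" "f l = app V W F z e" using f by blast
    then show "\<exists>e. e \<in> space V z \<and> app V W F z e = f l" by auto
  qed
  then have "\<exists>pre. \<forall>l\<in>L. pre l \<in> space V z \<and> app V W F z (pre l) = f l" by (rule bchoice)
  then obtain pre where pre: "\<forall>l\<in>L. pre l \<in> space V z \<and> app V W F z (pre l) = f l" ..
  have "app V W F z (\<lambda>i. \<Sum>l\<in>L. c l * pre l i) = (\<lambda>j. \<Sum>l\<in>L. c l * app V W F z (pre l) j)"
    by (rule app_sum_scale)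
  also have "\<dots> = (\<lambda>i. \<Sum>l\<in>L. c l * f l i)"
    by (intro ext sum.cong) (use pre in auto)
  finally have "app V W F z (\<lambda>i. \<Sum>l\<in>L. c l * pre l i) = (\<lambda>i. \<Sum>l\<in>L. c l * f l i)" .
  moreover have "(\<lambda>i. \<Sum>l\<in>L. c l * pre l i) \<in> space V z"
    by (rule space_sum) (use pre in \<open>auto intro: space_scale\<close>)
  ultimately show ?thesis by (rule image_eqI[OF sym])
qed

lemma image_app_add:
  assumes "u \<in> app V W F z ` space V z" "w \<in> app V W F z ` space V z"
  shows "(\<lambda>i. u i + w i) \<in> app V W F z ` space V z"
proof -
  obtain u' w' where "u' \<in> space V z" "u = app V W F z u'" "w' \<in> space V z" "w = app V W F z w'"
    using assms by blast
  then have "app V W F z (\<lambda>i. u' i + w' i) = (\<lambda>i. u i + w i)" "(\<lambda>i. u' i + w' i) \<in> space V z"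
    by (simp_all add: app_add space_add)
  then show ?thesis by (rule image_eqI[OF sym])
qed

lemma kernel_subrep:
  assumes "is_hom Q V W F"
  shows "subrep Q V (\<lambda>z. {v \<in> space V z. app V W F z v = (\<lambda>_. 0)})"
  unfolding subrep_def
proof (intro conjI ballI allI)
  fix a u
  assume a: "a \<in> arrs Q" and u: "u \<in> {v \<in> space V (src Q a). app V W F (src Q a) v = (\<lambda>_. 0)}"
  have "app V W F (tgt Q a) (act Q V a u) = act Q W a (app V W F (src Q a) u)"
    using assms a u by (simp add: is_hom_def)
  then show "act Q V a u \<in> {v \<in> space V (tgt Q a). app V W F (tgt Q a) v = (\<lambda>_. 0)}"
    using u act_in_space by (simp add: act_zero)
qed (auto simp: space_zero space_add space_scale app_zero app_add app_scale)

lemma essential_mono_hom_mono: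
  assumes ess: "essential_mono Q M E i" and F: "is_hom Q E W F"
    and restr: "hom_mono Q M W (hom_comp E F i)"
  shows "hom_mono Q E W F"
proof -
  define U where "U z = {v \<in> space E z. app E W F z v = (\<lambda>_. 0)}" for z
  have zero: "u = (\<lambda>_. 0)" if zu: "z \<in> verts Q" "u \<in> U z" for z u
  proof (rule ccontr)
    assume "u \<noteq> (\<lambda>_. 0)"
    moreover have "subrep Q E U" unfolding U_def by (rule kernel_subrep[OF F])
    ultimately have "\<exists>x\<in>verts Q. \<exists>u'\<in>U x. u' \<noteq> (\<lambda>_. 0) \<and> u' \<in> app M E i x ` space M x"
      using ess zu unfolding essential_mono_def by blast
    then obtain x u' where x: "x \<in> verts Q" "u' \<in> U x" "u' \<noteq> (\<lambda>_. 0)" "u' \<in> app M E i x ` space M x"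
      by blast
    then obtain m where m: "m \<in> space M x" "u' = app M E i x m" by auto
    have "app M W (hom_comp E F i) x m = app M W (hom_comp E F i) x (\<lambda>_. 0)"
      using x(2) m by (simp add: U_def app_hom_comp app_zero)
    moreover have "inj_on (app M W (hom_comp E F i) x) (space M x)"
      using restr x(1) by (simp add: hom_mono_def)
    ultimately have "m = (\<lambda>_. 0)" using m(1) space_zero[of M x] by (simp add: inj_on_def)
    then show False using x(3) m(2) by (simp add: app_zero)
  qed
  show ?thesis
    unfolding hom_mono_def inj_on_def
  proof (intro ballI impI)
    fix z v w
    assume z: "z \<in> verts Q" and "v \<in> space E z" "w \<in> space E z" "app E W F z v = app E W F z w"
    then have "(\<lambda>i. v i - w i) \<in> U z" by (simp add: U_def space_diff app_diff)
    then have "(\<lambda>i. v i - w i) = (\<lambda>_. 0)" by (rule zero[OF z])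
    then show "v = w" by (simp add: fun_eq_iff)
  qed
qed

text \<open>The factorisation of f through the epimorphism p; meaningful only when the kernel of p is
  contained in that of f.\<close>

definition induced :: "('q,'a,'k::field) rep \<Rightarrow> ('q,'a,'k) rep \<Rightarrow> ('q,'a,'k) rep
    \<Rightarrow> ('q \<Rightarrow> nat \<Rightarrow> nat \<Rightarrow> 'k) \<Rightarrow> ('q \<Rightarrow> nat \<Rightarrow> nat \<Rightarrow> 'k) \<Rightarrow> ('q \<Rightarrow> nat \<Rightarrow> nat \<Rightarrow> 'k)" where
  "induced E C D p f = (\<lambda>x t l. app E D f x (SOME e. e \<in> space E x \<and> app E C p x e = unit_vec l) t)"

lemma app_induced:
  assumes fin: "finite (bas C x)" and x: "x \<in> verts Q" and p: "hom_epi Q E C p"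
    and ker: "\<And>e. e \<in> space E x \<Longrightarrow> app E C p x e = (\<lambda>_. 0) \<Longrightarrow> app E D f x e = (\<lambda>_. 0)"
    and e: "e \<in> space E x"
  shows "app C D (induced E C D p f) x (app E C p x e) = app E D f x e"
proof -
  define lift where "lift l = (SOME e. e \<in> space E x \<and> app E C p x e = unit_vec l)" for l
  have lift: "lift l \<in> space E x \<and> app E C p x (lift l) = unit_vec l" if "l \<in> bas C x" for l
  proof -
    have "app E C p x ` space E x = space C x" using p x by (simp add: hom_epi_def)
    then have "unit_vec l \<in> app E C p x ` space E x" using unit_vec_in_space[OF that] by simp
    then have "\<exists>e. e \<in> space E x \<and> app E C p x e = unit_vec l" by (metis imageE)
    from someI_ex[OF this] show ?thesis unfolding lift_def .
  qed
  define c where "c = app E C p x e"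
  define e' where "e' = (\<lambda>i. \<Sum>l\<in>bas C x. c l * lift l i)"
  have "e' \<in> space E x" unfolding e'_def by (intro space_sum space_scale) (use lift in auto)
  have "app E C p x e' = (\<lambda>j. \<Sum>l\<in>bas C x. c l * unit_vec l j)"
    unfolding e'_def app_sum_scale by (intro ext sum.cong) (use lift in auto)
  also have "\<dots> = c" using unit_vec_expansion[OF fin app_in_space] by (simp add: c_def)
  finally have "app E C p x (\<lambda>i. e i - e' i) = (\<lambda>_. 0)" by (simp add: app_diff c_def)
  then have "app E D f x (\<lambda>i. e i - e' i) = (\<lambda>_. 0)"
    by (rule ker[OF space_diff[OF e \<open>e' \<in> space E x\<close>]])
  then have "app E D f x e = app E D f x e'" by (simp add: app_diff fun_eq_iff)
  also have "\<dots> = (\<lambda>t. \<Sum>l\<in>bas C x. c l * app E D f x (lift l) t)"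
    unfolding e'_def by (rule app_sum_scale)
  also have "\<dots> = app C D (induced E C D p f) x c"
  proof
    fix t
    show "(\<Sum>l\<in>bas C x. c l * app E D f x (lift l) t) = app C D (induced E C D p f) x c t"
      by (cases "t \<in> bas D x") (simp_all add: app_def[of C D] induced_def lift_def mult.commute app_outside)
  qed
  finally show ?thesis by (simp add: c_def)
qed

lemma is_hom_induced:
  assumes arrs: "\<And>a. a \<in> arrs Q \<Longrightarrow> src Q a \<in> verts Q \<and> tgt Q a \<in> verts Q"
    and fin: "\<And>x. finite (bas C x)"
    and p: "is_hom Q E C p" "hom_epi Q E C p" and f: "is_hom Q E D f"
    and ker: "\<And>x e. x \<in> verts Q \<Longrightarrow> e \<in> space E x
      \<Longrightarrow> app E C p x e = (\<lambda>_. 0) \<Longrightarrow> app E D f x e = (\<lambda>_. 0)"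
  shows "is_hom Q C D (induced E C D p f)"
  unfolding is_hom_def
proof (intro ballI)
  let ?g = "induced E C D p f"
  fix a c
  assume a: "a \<in> arrs Q" and c: "c \<in> space C (src Q a)"
  have st: "src Q a \<in> verts Q" "tgt Q a \<in> verts Q" using arrs[OF a] by auto
  obtain e where e: "e \<in> space E (src Q a)" "c = app E C p (src Q a) e"
    using p(2) st(1) c unfolding hom_epi_def by blast
  have "act Q C a c = app E C p (tgt Q a) (act Q E a e)" using p(1) a e by (simp add: is_hom_def)
  then have "app C D ?g (tgt Q a) (act Q C a c) = app E D f (tgt Q a) (act Q E a e)"
    using app_induced[OF fin st(2) p(2) ker[OF st(2)] act_in_space] by simp
  also have "\<dots> = act Q D a (app E D f (src Q a) e)" using f a e by (simp add: is_hom_def)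
  finally show "app C D ?g (tgt Q a) (act Q C a c) = act Q D a (app C D ?g (src Q a) c)"
    using app_induced[OF fin st(1) p(2) ker[OF st(1)] e(1)] e(2) by simp
qed

lemma isomorphic_if_epis_same_kernel:
  assumes arrs: "\<And>a. a \<in> arrs Q \<Longrightarrow> src Q a \<in> verts Q \<and> tgt Q a \<in> verts Q"
    and fin: "\<And>x. finite (bas C x)"
    and p: "is_hom Q E C p" "hom_epi Q E C p" and f: "is_hom Q E D f" "hom_epi Q E D f"
    and ker: "\<And>x e. x \<in> verts Q \<Longrightarrow> e \<in> space E x
      \<Longrightarrow> app E C p x e = (\<lambda>_. 0) \<longleftrightarrow> app E D f x e = (\<lambda>_. 0)"
  shows "isomorphic Q C D"
proof -
  let ?g = "induced E C D p f"
  have g: "app C D ?g x (app E C p x e) = app E D f x e" if "x \<in> verts Q" "e \<in> space E x" for x e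
    using app_induced[OF fin that(1) p(2)] ker that by blast
  have pre: "\<exists>e\<in>space E x. c = app E C p x e" if "x \<in> verts Q" "c \<in> space C x" for x c
    using p(2) that unfolding hom_epi_def by blast
  have "hom_mono Q C D ?g"
    unfolding hom_mono_def inj_on_def
  proof (intro ballI impI)
    fix x c c'
    assume x: "x \<in> verts Q" and c: "c \<in> space C x" "c' \<in> space C x"
      and eq: "app C D ?g x c = app C D ?g x c'"
    obtain e e' where e: "e \<in> space E x" "c = app E C p x e" "e' \<in> space E x" "c' = app E C p x e'"
      using pre[OF x c(1)] pre[OF x c(2)] by blast
    have "app E D f x (\<lambda>i. e i - e' i) = (\<lambda>_. 0)"
      using eq g[OF x e(1)] g[OF x e(3)] e by (simp add: app_diff)
    then have "app E C p x (\<lambda>i. e i - e' i) = (\<lambda>_. 0)" using ker[OF x space_diff[OF e(1,3)]] by blast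
    then show "c = c'" using e by (simp add: app_diff fun_eq_iff)
  qed
  moreover have "hom_epi Q C D ?g"
    unfolding hom_epi_def
  proof (intro ballI equalityI subsetI)
    fix x d
    assume x: "x \<in> verts Q" and d: "d \<in> space D x"
    then obtain e where "e \<in> space E x" "d = app E D f x e" using f(2) unfolding hom_epi_def by blast
    then show "d \<in> app C D ?g x ` space C x" using g[OF x] app_in_space by (metis image_eqI)
  qed (auto simp: app_in_space)
  ultimately show ?thesis
    using is_hom_induced[OF arrs fin p f(1)] ker unfolding isomorphic_def by blast
qed

lemma dsum_bas: "bas (dsum V W) x = (\<lambda>i. 2 * i) ` bas V x \<union> (\<lambda>i. 2 * i + 1) ` bas W x"
  by (simp add: dsum_def)

lemma dsum_bas_iff:
  "t \<in> bas (dsum V W) x \<longleftrightarrow> t div 2 \<in> bas (if even t then V else W) x"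
  by (auto simp: dsum_bas elim!: evenE oddE intro: image_eqI[where x = "t div 2"]) presburger+

lemma dsum_act_even:
  fixes u :: "nat \<Rightarrow> 'k::field"
  assumes "finite (bas V (src Q a))" "finite (bas W (src Q a))"
  shows "act Q (dsum V W) a u (2 * k) = act Q V a (\<lambda>k'. u (2 * k')) k"
proof -
  let ?E = "(\<lambda>i. 2 * i) ` bas V (src Q a)" and ?O = "(\<lambda>i. 2 * i + 1) ` bas W (src Q a)"
  let ?m = "mat (dsum V W) a (2 * k)"
  have "?E \<inter> ?O = {}" by auto presburger
  then have "(\<Sum>i\<in>?E \<union> ?O. ?m i * u i) = (\<Sum>i\<in>?E. ?m i * u i) + (\<Sum>i\<in>?O. ?m i * u i)"
    using assms by (simp add: sum.union_disjoint)
  also have "(\<Sum>i\<in>?O. ?m i * u i) = 0"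
    by (rule sum.neutral) (auto simp: dsum_def)
  also have "(\<Sum>i\<in>?E. ?m i * u i) = (\<Sum>i\<in>bas V (src Q a). mat V a k i * u (2 * i))"
    by (subst sum.reindex) (auto simp: inj_on_def dsum_def)
  finally have "(\<Sum>i\<in>bas (dsum V W) (src Q a). ?m i * u i)
      = (\<Sum>i\<in>bas V (src Q a). mat V a k i * u (2 * i))"
    by (simp add: dsum_bas)
  moreover have "2 * k \<in> bas (dsum V W) (tgt Q a) \<longleftrightarrow> k \<in> bas V (tgt Q a)"
    by (auto simp: dsum_bas) presburger
  ultimately show ?thesis by (simp add: act_def)
qed

lemma dsum_act_odd:
  fixes u :: "nat \<Rightarrow> 'k::field"
  assumes "finite (bas V (src Q a))" "finite (bas W (src Q a))"
  shows "act Q (dsum V W) a u (2 * k + 1) = act Q W a (\<lambda>k'. u (2 * k' + 1)) k"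
proof -
  let ?E = "(\<lambda>i. 2 * i) ` bas V (src Q a)" and ?O = "(\<lambda>i. 2 * i + 1) ` bas W (src Q a)"
  let ?m = "mat (dsum V W) a (2 * k + 1)"
  have "?E \<inter> ?O = {}" by auto presburger
  then have "(\<Sum>i\<in>?E \<union> ?O. ?m i * u i) = (\<Sum>i\<in>?E. ?m i * u i) + (\<Sum>i\<in>?O. ?m i * u i)"
    using assms by (simp add: sum.union_disjoint)
  also have "(\<Sum>i\<in>?E. ?m i * u i) = 0"
    by (rule sum.neutral) (auto simp: dsum_def)
  also have "(\<Sum>i\<in>?O. ?m i * u i) = (\<Sum>i\<in>bas W (src Q a). mat W a k i * u (2 * i + 1))"
    by (subst sum.reindex) (auto simp: inj_on_def dsum_def)
  finally have "(\<Sum>i\<in>bas (dsum V W) (src Q a). ?m i * u i)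
      = (\<Sum>i\<in>bas W (src Q a). mat W a k i * u (2 * i + 1))"
    by (simp add: dsum_bas)
  moreover have "2 * k + 1 \<in> bas (dsum V W) (tgt Q a) \<longleftrightarrow> k \<in> bas W (tgt Q a)"
    by (auto simp: dsum_bas) presburger
  ultimately show ?thesis by (simp add: act_def)
qed

lemma dsum_act:
  fixes u :: "nat \<Rightarrow> 'k::field"
  assumes "finite (bas V (src Q a))" "finite (bas W (src Q a))"
  shows "act Q (dsum V W) a u t
    = act Q (if even t then V else W) a (\<lambda>k. u (2 * k + t mod 2)) (t div 2)"
proof (cases "even t")
  case True
  then show ?thesis using dsum_act_even[OF assms, of u "t div 2"] by simp
next
  case False
  then have "t mod 2 = 1" by presburger
  then show ?thesis using dsum_act_odd[OF assms, of u "t div 2"] False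
    by (simp add: odd_two_times_div_two_succ)
qed

definition path_end :: "('q,'a) quiver \<Rightarrow> 'q \<Rightarrow> 'a list \<Rightarrow> 'q" where
  "path_end Q x p = (if p = [] then x else tgt Q (last p))"

lemma path_end_Nil [simp]: "path_end Q x [] = x"
  by (simp add: path_end_def)

lemma path_end_Cons [simp]: "path_end Q x (a # p) = path_end Q (tgt Q a) p"
  by (simp add: path_end_def)

lemma is_path_Nil [simp]: "is_path Q x [] \<longleftrightarrow> x \<in> verts Q"
  by (simp add: is_path_def)

lemma is_path_verts: "is_path Q x p \<Longrightarrow> x \<in> verts Q"
  by (simp add: is_path_def)

locale string_alg =
  fixes Q :: "('q,'a) quiver" and R :: "'a list set"
  assumes string_algebra: "string_algebra Q R"
begin

lemma src_in_verts: "a \<in> arrs Q \<Longrightarrow> src Q a \<in> verts Q"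
  using string_algebra by (simp add: string_algebra_def finite_quiver_def)

lemma tgt_in_verts: "a \<in> arrs Q \<Longrightarrow> tgt Q a \<in> verts Q"
  using string_algebra by (simp add: string_algebra_def finite_quiver_def)

lemma finite_arrs: "finite (arrs Q)"
  using string_algebra by (simp add: string_algebra_def finite_quiver_def)

lemma relation_npath: "p \<in> R \<Longrightarrow> is_npath Q p \<and> 2 \<le> length p"
  using string_algebra by (auto simp: string_algebra_def admissible_monomial_def)

lemma relation_closed: "p \<in> R \<Longrightarrow> is_npath Q (u @ p @ w) \<Longrightarrow> u @ p @ w \<in> R"
  using string_algebra by (auto simp: string_algebra_def admissible_monomial_def)

lemma long_paths_in_relations: "\<exists>N. \<forall>ps. is_npath Q ps \<and> N \<le> length ps \<longrightarrow> ps \<in> R"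
  using string_algebra by (auto simp: string_algebra_def admissible_monomial_def)

lemma relation_nonempty: "p \<in> R \<Longrightarrow> p \<noteq> []"
  using relation_npath by (auto simp: is_npath_def)

lemma subpath_notin_relations: "u @ p @ w \<notin> R \<Longrightarrow> is_npath Q (u @ p @ w) \<Longrightarrow> p \<notin> R"
  using relation_closed by blast

lemma is_path_Cons:
  "is_path Q x (a # p) \<longleftrightarrow> x \<in> verts Q \<and> a \<in> arrs Q \<and> src Q a = x \<and> is_path Q (tgt Q a) p"
proof
  assume H: "is_path Q x (a # p)"
  have "tgt Q (p ! i) = src Q (p ! Suc i)" if "Suc i < length p" for i
    using H that spec[of _ "Suc i"] unfolding is_path_def by auto
  moreover have "src Q (hd p) = tgt Q a" if "p \<noteq> []"
    using H that spec[of _ 0] unfolding is_path_def by (auto simp: hd_conv_nth)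
  ultimately show "x \<in> verts Q \<and> a \<in> arrs Q \<and> src Q a = x \<and> is_path Q (tgt Q a) p"
    using H tgt_in_verts unfolding is_path_def by auto
next
  assume H: "x \<in> verts Q \<and> a \<in> arrs Q \<and> src Q a = x \<and> is_path Q (tgt Q a) p"
  have "tgt Q ((a # p) ! i) = src Q ((a # p) ! Suc i)" if i: "Suc i < length (a # p)" for i
    using H i unfolding is_path_def by (cases i) (auto simp: hd_conv_nth)
  then show "is_path Q x (a # p)" using H unfolding is_path_def by auto
qed

lemma is_path_append:
  "is_path Q x (p @ q) \<longleftrightarrow> is_path Q x p \<and> is_path Q (path_end Q x p) q"
proof (induction p arbitrary: x)
  case Nil
  show ?case by (cases q) (auto simp: is_path_Cons)
next
  case (Cons a p)
  then show ?case by (auto simp: is_path_Cons)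
qed

lemma path_end_in_verts: "is_path Q x p \<Longrightarrow> path_end Q x p \<in> verts Q"
  by (induction p arbitrary: x) (auto simp: is_path_Cons)

lemma is_path_npath: "is_path Q x p \<Longrightarrow> p \<noteq> [] \<Longrightarrow> is_npath Q p"
  by (cases p) (auto simp: is_npath_def is_path_Cons)

lemma is_path_take: "is_path Q x p \<Longrightarrow> is_path Q x (take k p)"
  using is_path_append[of x "take k p" "drop k p"] by simp

lemma is_path_drop: "is_path Q x p \<Longrightarrow> is_path Q (path_end Q x (take k p)) (drop k p)"
  using is_path_append[of x "take k p" "drop k p"] by simp

lemma path_vertex_eq_path_end: "k \<le> length p \<Longrightarrow> path_vertex Q x p k = path_end Q x (take k p)"
  by (cases k) (auto simp: path_vertex_def path_end_def take_Suc_conv_app_nth)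

lemma src_nth_eq_path_vertex:
  assumes p: "is_path Q x p" and k: "k < length p"
  shows "src Q (p ! k) = path_vertex Q x p k"
proof -
  have "drop k p = p ! k # drop (Suc k) p" using k by (simp add: Cons_nth_drop_Suc)
  then show ?thesis
    using is_path_drop[OF p, of k] k by (simp add: is_path_Cons path_vertex_eq_path_end)
qed

lemma path_vertex_in_verts: "is_path Q x p \<Longrightarrow> k \<le> length p \<Longrightarrow> path_vertex Q x p k \<in> verts Q"
  by (simp add: path_vertex_eq_path_end path_end_in_verts is_path_take)

lemma npath_Cons:
  "is_npath Q (a # q) \<longleftrightarrow>
     a \<in> arrs Q \<and> src Q a \<in> verts Q \<and> (q = [] \<or> is_npath Q q \<and> src Q (hd q) = tgt Q a)"
  by (cases q) (auto simp: is_npath_def is_path_Cons tgt_in_verts)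

lemma hom_act_path:
  assumes F: "is_hom Q V W F" and p: "is_path Q z p" and v: "v \<in> space V z"
  shows "app V W F (path_end Q z p) (act_path Q V p v) = act_path Q W p (app V W F z v)"
  using p v
proof (induction p arbitrary: z v)
  case Nil
  then show ?case by simp
next
  case (Cons a p)
  have a: "a \<in> arrs Q" "src Q a = z" "is_path Q (tgt Q a) p"
    using Cons.prems(1) unfolding is_path_Cons by auto
  have "app V W F (tgt Q a) (act Q V a v) = act Q W a (app V W F z v)"
    using F a Cons.prems(2) unfolding is_hom_def by auto
  then show ?case using Cons.IH[OF a(3) act_in_space] by simp
qed

lemma act_path_in_space:
  "is_path Q z p \<Longrightarrow> v \<in> space V z \<Longrightarrow> act_path Q V p v \<in> space V (path_end Q z p)"
  by (induction p arbitrary: z v) (auto simp: is_path_Cons act_in_space)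

end

lemma string_rep_bas: "bas (string_rep Q x p) z = {i. i \<le> length p \<and> path_vertex Q x p i = z}"
  by (simp add: string_rep_def)

lemma finite_string_rep_bas: "finite (bas (string_rep Q x p) z)"
  by (simp add: string_rep_bas)

context string_alg
begin

lemma string_rep_act:
  fixes u :: "nat \<Rightarrow> 'k::field"
  assumes p: "is_path Q x p"
  shows "act Q (string_rep Q x p) a u k
    = (if 0 < k \<and> k \<le> length p \<and> p ! (k - 1) = a then u (k - 1) else 0)"
proof -
  let ?V = "string_rep Q x p :: ('q,'a,'k) rep"
  let ?B = "bas ?V (src Q a)"
  define c where "c = (if 0 < k \<and> k \<le> length p \<and> p ! (k - 1) = a then u (k - 1) else 0)"
  have "(\<Sum>i\<in>?B. mat ?V a k i * u i) = (\<Sum>i\<in>?B. if i = k - 1 then c else 0)"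
    by (rule sum.cong) (auto simp: string_rep_def c_def)
  also have "\<dots> = (if k - 1 \<in> ?B then c else 0)"
    by (simp add: sum.delta finite_string_rep_bas)
  finally have "(\<Sum>i\<in>?B. mat ?V a k i * u i) = (if k - 1 \<in> ?B then c else 0)" .
  moreover have "path_vertex Q x p k = tgt Q a \<and> path_vertex Q x p (k - 1) = src Q a"
    if "0 < k" "k \<le> length p" "p ! (k - 1) = a"
    using that src_nth_eq_path_vertex[OF p, of "k - 1"] by (cases k) (auto simp: path_vertex_def)
  ultimately show ?thesis by (auto simp add: act_def c_def string_rep_bas)
qed

lemma string_rep_act_path_nonzero:
  fixes u :: "nat \<Rightarrow> 'k::field"
  assumes p: "is_path Q x p" and u: "u \<in> space (string_rep Q x p) z"
    and nz: "act_path Q (string_rep Q x p) r u k \<noteq> 0"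
  shows "length r \<le> k \<and> k \<le> length p \<and> take (length r) (drop (k - length r) p) = r"
  using nz
proof (induction r arbitrary: k rule: rev_induct)
  case Nil
  then show ?case using u by (auto simp: space_def string_rep_bas)
next
  case (snoc a r)
  have k: "0 < k" "k \<le> length p" "p ! (k - 1) = a"
    and nz': "act_path Q (string_rep Q x p) r u (k - 1) \<noteq> 0"
    using snoc.prems unfolding act_path_snoc string_rep_act[OF p] by (auto split: if_splits)
  from snoc.IH[OF nz'] have IH: "length r \<le> k - 1" "take (length r) (drop (k - 1 - length r) p) = r"
    by auto
  define s where "s = k - 1 - length r"
  have sl: "length r < length (drop s p)" using IH k by (simp add: s_def)
  have "take (length (r @ [a])) (drop s p) = take (length r) (drop s p) @ [drop s p ! length r]"
    using sl by (simp add: take_Suc_conv_app_nth)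
  also have "drop s p ! length r = p ! (k - 1)" using IH k sl by (simp add: s_def)
  finally show ?case using IH k by (simp add: s_def)
qed

lemma string_rep_is_rep:
  assumes p: "is_path Q x p" and notR: "p \<notin> R"
  shows "is_rep Q R (string_rep Q x p)"
proof -
  have "act_path Q (string_rep Q x p) r v = (\<lambda>_. 0)"
    if r: "r \<in> R" and v: "v \<in> space (string_rep Q x p) (src Q (hd r))" for r v
  proof (rule ccontr)
    assume "act_path Q (string_rep Q x p) r v \<noteq> (\<lambda>_. 0)"
    then obtain k where "act_path Q (string_rep Q x p) r v k \<noteq> 0" by auto
    from string_rep_act_path_nonzero[OF p v this] have H: "length r \<le> k" "k \<le> length p"
      "take (length r) (drop (k - length r) p) = r" by auto
    define s where "s = k - length r"
    have p_split: "p = take s p @ r @ drop (s + length r) p"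
      using H by (metis append_take_drop_id drop_drop add.commute s_def)
    have "p \<noteq> []" using relation_nonempty[OF r] H by auto
    then have "is_npath Q p" using is_path_npath[OF p] by auto
    then have "p \<in> R" using relation_closed[OF r, of "take s p" "drop (s + length r) p"] p_split
      by simp
    with notR show False by simp
  qed
  moreover have "\<forall>z. z \<notin> verts Q \<longrightarrow> bas (string_rep Q x p) z = {}"
    using path_vertex_in_verts[OF p] by (auto simp: string_rep_bas)
  ultimately show ?thesis by (auto simp: is_rep_def finite_string_rep_bas)
qed

end

definition paths_to :: "('q,'a) quiver \<Rightarrow> 'a list set \<Rightarrow> 'q \<Rightarrow> 'a list set" where
  "paths_to Q R y = {q. q = [] \<or> (is_npath Q q \<and> tgt Q (last q) = y \<and> q \<notin> R)}"

definition path_start :: "('q,'a) quiver \<Rightarrow> 'q \<Rightarrow> 'a list \<Rightarrow> 'q" where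
  "path_start Q y q = (if q = [] then y else src Q (hd q))"

lemma Nil_paths_to [simp]: "[] \<in> paths_to Q R y"
  by (simp add: paths_to_def)

lemma path_start_Nil [simp]: "path_start Q y [] = y"
  by (simp add: path_start_def)

lemma path_start_Cons [simp]: "path_start Q y (a # q) = src Q a"
  by (simp add: path_start_def)

context string_alg
begin

lemma paths_to_Cons:
  assumes "a # q \<in> paths_to Q R y"
  shows "q \<in> paths_to Q R y \<and> a \<in> arrs Q \<and> path_start Q y q = tgt Q a"
proof -
  have np: "is_npath Q (a # q)" and t: "tgt Q (last (a # q)) = y" and nr: "a # q \<notin> R"
    using assms by (auto simp: paths_to_def)
  show ?thesis
  proof (cases q)
    case Nil
    then show ?thesis using np t by (simp add: npath_Cons)
  next
    case (Cons b q')
    have "q \<notin> R" using subpath_notin_relations[of "[a]" q "[]"] nr np by auto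
    then show ?thesis using np t Cons by (auto simp: npath_Cons paths_to_def)
  qed
qed

lemma paths_to_drop: "q \<in> paths_to Q R y \<Longrightarrow> drop k q \<in> paths_to Q R y"
proof (induction k arbitrary: q)
  case (Suc k)
  then show ?case using paths_to_Cons by (cases q) auto
qed simp

lemma paths_to_append: "r @ q \<in> paths_to Q R y \<Longrightarrow> q \<in> paths_to Q R y"
  using paths_to_drop[of "r @ q" y "length r"] by simp

lemma Cons_notin_paths_to:
  assumes "a \<in> arrs Q" "q \<in> paths_to Q R y" "path_start Q y q = tgt Q a" "a # q \<notin> paths_to Q R y"
  shows "a # q \<in> R"
proof -
  have "is_npath Q (a # q)" using assms src_in_verts
    by (cases q) (auto simp: npath_Cons paths_to_def path_start_def)
  moreover have "tgt Q (last (a # q)) = y"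
    using assms by (cases q) (auto simp: paths_to_def path_start_def)
  ultimately show ?thesis using assms by (auto simp: paths_to_def)
qed

text \<open>This is where condition (3) of a string algebra enters.\<close>

lemma paths_to_Cons_unique:
  assumes q: "q \<noteq> []" and a: "a # q \<in> paths_to Q R y" and b: "b # q \<in> paths_to Q R y"
  shows "a = b"
proof -
  let ?c = "hd q"
  let ?G = "{g\<in>arrs Q. tgt Q g = src Q ?c \<and> [g, ?c] \<notin> R}"
  have "?c \<in> arrs Q"
    using paths_to_Cons[OF a] q by (cases q) (auto simp: paths_to_def is_npath_def is_path_Cons)
  then have card: "card ?G \<le> 1"
    using string_algebra by (auto simp: string_algebra_def)
  have mem: "g \<in> ?G" if g: "g # q \<in> paths_to Q R y" for g
  proof -
    have np: "is_npath Q (g # q)" and nr: "g # q \<notin> R" using g by (auto simp: paths_to_def)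
    have "g # q = [] @ [g, ?c] @ tl q" using q by simp
    then have "[g, ?c] \<notin> R" using subpath_notin_relations np nr by metis
    then show ?thesis using paths_to_Cons[OF g] q by (simp add: path_start_def)
  qed
  show "a = b"
    using card mem[OF a] mem[OF b] card_le_Suc0_iff_eq[of ?G] finite_arrs by auto
qed

lemma paths_to_path:
  "q \<in> paths_to Q R y \<Longrightarrow> y \<in> verts Q \<Longrightarrow> is_path Q (path_start Q y q) q \<and> path_end Q (path_start Q y q) q = y"
  by (cases q) (auto simp: paths_to_def is_npath_def path_start_def path_end_def)

lemma finite_paths_to: "finite (paths_to Q R y)"
proof -
  obtain N where N: "\<forall>ps. is_npath Q ps \<and> N \<le> length ps \<longrightarrow> ps \<in> R"
    using long_paths_in_relations by blast
  have "paths_to Q R y \<subseteq> {xs. set xs \<subseteq> arrs Q \<and> length xs \<le> N}"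
  proof
    fix q assume q: "q \<in> paths_to Q R y"
    show "q \<in> {xs. set xs \<subseteq> arrs Q \<and> length xs \<le> N}"
    proof (cases "q = []")
      case False
      then have "is_npath Q q" "q \<notin> R" using q by (auto simp: paths_to_def)
      then show ?thesis using N by (auto simp: is_npath_def is_path_def not_le dest: spec[of _ q])
    qed simp
  qed
  then show ?thesis using finite_lists_length_le[OF finite_arrs] finite_subset by blast
qed

end

section \<open>A model of the indecomposable injective at a vertex\<close>

text \<open>The coordinate of the basis path q is idx q; an arrow a maps the coordinate of a # q to
  that of q.  This is the dual of the indecomposable projective at y, i.e. I(y).\<close>

definition inj_model :: "('q,'a) quiver \<Rightarrow> 'a list set \<Rightarrow> 'q \<Rightarrow> ('a list \<Rightarrow> nat)
    \<Rightarrow> ('q,'a,'k::field) rep" where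
  "inj_model Q R y idx = \<lparr> bas = (\<lambda>z. idx ` {q\<in>paths_to Q R y. path_start Q y q = z}),
     mat = (\<lambda>a j i. if \<exists>q\<in>paths_to Q R y. \<exists>q'\<in>paths_to Q R y. i = idx q \<and> j = idx q' \<and> q = a # q'
                    then 1 else 0) \<rparr>"

locale injective_model = string_alg Q R for Q :: "('q,'a) quiver" and R +
  fixes y :: 'q and idx :: "'a list \<Rightarrow> nat" and J :: "('q,'a,'k::field) rep"
  defines J_def: "J \<equiv> inj_model Q R y idx"
  assumes y_in_verts: "y \<in> verts Q" and inj_idx: "inj_on idx (paths_to Q R y)"
begin

abbreviation P where "P \<equiv> paths_to Q R y"
abbreviation start where "start \<equiv> path_start Q y"

lemma J_bas: "bas J z = idx ` {q\<in>P. start q = z}"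
  by (simp add: J_def inj_model_def)

lemma finite_J_bas: "finite (bas J z)"
  using finite_paths_to by (simp add: J_bas)

lemma idx_eq_iff: "q \<in> P \<Longrightarrow> q' \<in> P \<Longrightarrow> idx q = idx q' \<longleftrightarrow> q = q'"
  using inj_idx by (auto simp: inj_on_def)

lemma idx_in_J_bas: "q \<in> P \<Longrightarrow> idx q \<in> bas J z \<longleftrightarrow> start q = z"
  using idx_eq_iff by (auto simp: J_bas)

lemma J_act:
  fixes v :: "nat \<Rightarrow> 'k::field"
  assumes q': "q' \<in> P"
  shows "act Q J a v (idx q') = (if start q' = tgt Q a \<and> a # q' \<in> P then v (idx (a # q')) else 0)"
proof -
  let ?S = "{q\<in>P. start q = src Q a}"
  let ?m = "mat (J::('q,'a,'k) rep) a (idx q')"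
  have "(\<Sum>i\<in>bas (J::('q,'a,'k) rep) (src Q a). ?m i * v i) = (\<Sum>q\<in>?S. ?m (idx q) * v (idx q))"
    unfolding J_bas by (rule sum.reindex_cong[where l = idx]) (use inj_idx in \<open>auto simp: inj_on_def\<close>)
  also have "\<dots> = (\<Sum>q\<in>?S. if q = a # q' then v (idx (a # q')) else 0)"
    by (rule sum.cong) (use q' idx_eq_iff in \<open>auto simp: J_def inj_model_def\<close>)
  also have "\<dots> = (if a # q' \<in> ?S then v (idx (a # q')) else 0)"
    using finite_paths_to by (simp add: sum.delta')
  finally show ?thesis
    using q' by (auto simp: act_def idx_in_J_bas)
qed

lemma J_act_outside: "j \<notin> idx ` P \<Longrightarrow> act Q J a v j = 0"
  by (auto simp: act_def J_bas)

lemma J_act_path: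
  fixes v :: "nat \<Rightarrow> 'k::field"
  assumes "q' \<in> P"
  shows "act_path Q J r v (idx q') = (if r @ q' \<in> P then v (idx (r @ q')) else 0)"
  using assms
proof (induction r arbitrary: q' rule: rev_induct)
  case (snoc a r)
  have "act_path Q J (r @ [a]) v (idx q') = act Q J a (act_path Q J r v) (idx q')"
    by (simp add: act_path_snoc)
  also have "\<dots> = (if start q' = tgt Q a \<and> a # q' \<in> P then act_path Q J r v (idx (a # q')) else 0)"
    using J_act[OF snoc.prems] .
  also have "\<dots> = (if (r @ [a]) @ q' \<in> P then v (idx ((r @ [a]) @ q')) else 0)"
  proof -
    have "(r @ [a]) @ q' \<in> P \<Longrightarrow> start q' = tgt Q a \<and> a # q' \<in> P"
      using paths_to_append[of r "a # q'" y] paths_to_Cons[of a q' y] by auto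
    then show ?thesis using snoc.IH[of "a # q'"] by auto
  qed
  finally show ?case .
qed simp

lemma J_act_path_outside: "r \<noteq> [] \<Longrightarrow> j \<notin> idx ` P \<Longrightarrow> act_path Q J r v j = 0"
  by (induction r rule: rev_induct) (auto simp: act_path_snoc J_act_outside)

lemma J_coord_eq_act_path: "q \<in> P \<Longrightarrow> v (idx q) = act_path Q J q v (idx [])"
  using J_act_path[of "[]" q v] by simp

lemma unit_vec_idx: "q \<in> P \<Longrightarrow> q' \<in> P \<Longrightarrow> unit_vec (idx q) (idx q') = (if q' = q then 1 else 0)"
  using idx_eq_iff by (auto simp: unit_vec_def)

lemma J_act_path_unit_vec:
  assumes q: "q \<in> P"
  shows "act_path Q J r (unit_vec (idx q))
    = (if \<exists>q''. q = r @ q'' then unit_vec (idx (drop (length r) q)) else (\<lambda>_. 0))"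
proof
  fix j
  have drop: "drop (length r) q \<in> P" using paths_to_drop[OF q] .
  show "act_path Q J r (unit_vec (idx q)) j
    = (if \<exists>q''. q = r @ q'' then unit_vec (idx (drop (length r) q)) else (\<lambda>_. 0)) j"
  proof (cases "j \<in> idx ` P")
    case True
    then obtain q'' where q'': "q'' \<in> P" "j = idx q''" by auto
    have "act_path Q J r (unit_vec (idx q)) (idx q'') = (if r @ q'' = q then 1 else 0)"
      using q by (auto simp: J_act_path[OF q''(1)] unit_vec_idx)
    moreover have "(\<exists>q0. q = r @ q0) \<Longrightarrow> r @ q'' = q \<longleftrightarrow> drop (length r) q = q''"
      by auto
    moreover have "r @ q'' = q \<Longrightarrow> \<exists>q0. q = r @ q0" by auto
    ultimately show ?thesis using q''(2) unit_vec_idx[OF drop q''(1)] by auto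
  next
    case False
    then have "act_path Q J r (unit_vec (idx q)) j = 0"
      using q J_act_path_outside by (cases "r = []") (auto simp: unit_vec_def)
    then show ?thesis using False drop by (auto simp: unit_vec_def)
  qed
qed

lemma J_expansion_on:
  assumes v: "v \<in> space J z" and S: "S \<subseteq> {r\<in>P. start r = z}"
    and vanish: "\<And>r. r \<in> P \<Longrightarrow> start r = z \<Longrightarrow> r \<notin> S \<Longrightarrow> v (idx r) = 0"
  shows "v = (\<lambda>j. \<Sum>r\<in>S. v (idx r) * unit_vec (idx r) j)"
proof -
  have "v = (\<lambda>j. \<Sum>t\<in>bas J z. v t * unit_vec t j)" using unit_vec_expansion[OF finite_J_bas v] .
  also have "\<dots> = (\<lambda>j. \<Sum>r\<in>{r\<in>P. start r = z}. v (idx r) * unit_vec (idx r) j)"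
    unfolding J_bas by (subst sum.reindex) (use inj_idx in \<open>auto simp: inj_on_def\<close>)
  also have "\<dots> = (\<lambda>j. \<Sum>r\<in>S. v (idx r) * unit_vec (idx r) j)"
    by (intro ext sum.mono_neutral_right) (use S vanish finite_paths_to in auto)
  finally show ?thesis .
qed

lemma J_is_rep: "is_rep Q R (J :: ('q,'a,'k::field) rep)"
proof -
  have "act_path Q J p v j = 0" if p: "p \<in> R" for p and v :: "nat \<Rightarrow> 'k" and j
  proof (cases "j \<in> idx ` P")
    case True
    then obtain q where q: "q \<in> P" "j = idx q" by auto
    have "p @ q \<notin> P"
    proof
      assume "p @ q \<in> P"
      then have "is_npath Q (p @ q)" "p @ q \<notin> R"
        using relation_nonempty[OF p] by (auto simp: paths_to_def)
      then show False using relation_closed[OF p, of "[]" q] by simp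
    qed
    then show ?thesis using J_act_path[OF q(1), of p v] q by simp
  next
    case False
    then show ?thesis using J_act_path_outside relation_nonempty[OF p] by simp
  qed
  moreover have "\<forall>z. z \<notin> verts Q \<longrightarrow> bas (J :: ('q,'a,'k) rep) z = {}"
    using paths_to_path[OF _ y_in_verts] is_path_verts by (force simp: J_bas)
  ultimately show ?thesis by (auto simp: is_rep_def finite_J_bas fun_eq_iff)
qed

end

locale suffix_embedding = injective_model Q R y idx J
  for Q :: "('q,'a) quiver" and R y idx and J :: "('q,'a,'k::field) rep" +
  fixes x0 :: 'q and pth :: "'a list"
  assumes pth_path: "is_path Q x0 pth" and pth_notin_relations: "pth \<notin> R"
    and y_eq: "y = path_end Q x0 pth"
begin

abbreviation SR :: "('q,'a,'k) rep" where "SR \<equiv> string_rep Q x0 pth"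

definition suffixes :: "'a list set" where
  "suffixes = {drop k pth | k. k \<le> length pth}"

lemma suffixes_iff: "q \<in> suffixes \<longleftrightarrow> q = drop (length pth - length q) pth"
  by (auto simp: suffixes_def)

lemma Nil_in_suffixes: "[] \<in> suffixes"
  by (simp add: suffixes_iff)

lemma Cons_in_suffixes_iff:
  "a # q \<in> suffixes \<longleftrightarrow> q \<in> suffixes \<and> length q < length pth \<and> pth ! (length pth - Suc (length q)) = a"
proof -
  have "drop (length pth - Suc (length q)) pth
      = pth ! (length pth - Suc (length q)) # drop (length pth - length q) pth"
    if "length q < length pth"
    using that Cons_nth_drop_Suc[of "length pth - Suc (length q)" pth] by (simp add: Suc_diff_Suc)
  moreover have "length q < length pth" if "a # q \<in> suffixes"
  proof -
    have "length (a # q) \<le> length pth"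
      using that unfolding suffixes_iff by (metis diff_le_self length_drop)
    then show ?thesis by simp
  qed
  ultimately show ?thesis unfolding suffixes_iff by auto
qed

lemma drop_in_paths_to: "k \<le> length pth \<Longrightarrow> drop k pth \<in> P"
proof (cases "k < length pth")
  case True
  have "is_npath Q (drop k pth)"
    using is_path_npath[OF is_path_drop[OF pth_path]] True by simp
  moreover have "drop k pth \<notin> R"
  proof -
    have "is_npath Q pth" using True by (intro is_path_npath[OF pth_path]) auto
    then show ?thesis
      using subpath_notin_relations[of "take k pth" "drop k pth" "[]"] pth_notin_relations by simp
  qed
  moreover have "tgt Q (last (drop k pth)) = y" using True y_eq by (auto simp: path_end_def)
  ultimately show ?thesis by (simp add: paths_to_def)
qed simp

lemma suffixes_subset: "suffixes \<subseteq> P"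
  using drop_in_paths_to by (auto simp: suffixes_def)

lemma start_drop: "k \<le> length pth \<Longrightarrow> start (drop k pth) = path_vertex Q x0 pth k"
proof (cases "k = length pth")
  case False
  assume "k \<le> length pth"
  then have k: "k < length pth" using False by simp
  then have "drop k pth = pth ! k # drop (Suc k) pth" by (simp add: Cons_nth_drop_Suc)
  then show ?thesis using src_nth_eq_path_vertex[OF pth_path k] by simp
qed (simp add: y_eq path_vertex_eq_path_end)

definition sfx :: "'q \<Rightarrow> nat \<Rightarrow> nat \<Rightarrow> 'k" where
  "sfx z t k = (if t = idx (drop k pth) then 1 else 0)"

lemma sfx_app_idx:
  assumes q: "q \<in> P"
  shows "app SR J sfx z u (idx q) = (if q \<in> suffixes \<and> start q = z then u (length pth - length q) else 0)"
proof -
  let ?k = "length pth - length q"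
  have eq: "idx q = idx (drop k pth) \<longleftrightarrow> q \<in> suffixes \<and> k = ?k" if "k \<le> length pth" for k
    using idx_eq_iff[OF q drop_in_paths_to[OF that]] that by (auto simp: suffixes_iff)
  have "(\<Sum>k\<in>bas SR z. sfx z (idx q) k * u k) = (\<Sum>k\<in>bas SR z. if q \<in> suffixes \<and> k = ?k then u k else 0)"
    by (rule sum.cong) (auto simp: sfx_def string_rep_bas eq)
  also have "\<dots> = (if q \<in> suffixes \<and> ?k \<in> bas SR z then u ?k else 0)"
    by (cases "q \<in> suffixes") (simp_all add: sum.delta finite_string_rep_bas)
  also have "?k \<in> bas SR z \<longleftrightarrow> start q = z" if "q \<in> suffixes"
    using that start_drop[of ?k] by (auto simp: string_rep_bas suffixes_iff)
  ultimately show ?thesis using q by (auto simp: app_def idx_in_J_bas)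
qed

lemma sfx_app_outside: "t \<notin> idx ` P \<Longrightarrow> app SR J sfx z u t = 0"
  by (auto simp: app_def J_def inj_model_def)

lemma sfx_hom: "is_hom Q SR J sfx"
  unfolding is_hom_def
proof (intro ballI ext)
  fix a u t
  assume a: "a \<in> arrs Q"
  show "app SR J sfx (tgt Q a) (act Q SR a u) t = act Q J a (app SR J sfx (src Q a) u) t"
  proof (cases "t \<in> idx ` P")
    case True
    then obtain q where q: "q \<in> P" "t = idx q" by auto
    have "a # q \<in> suffixes \<Longrightarrow> start q = tgt Q a \<and> a # q \<in> P"
      using suffixes_subset paths_to_Cons by blast
    then show ?thesis
      using q string_rep_act[OF pth_path, of a u "length pth - length q"]
      by (auto simp: sfx_app_idx J_act Cons_in_suffixes_iff Suc_diff_Suc)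
  qed (simp add: sfx_app_outside J_act_outside)
qed

lemma sfx_mono: "hom_mono Q SR J sfx"
  unfolding hom_mono_def inj_on_def
proof (intro ballI impI ext)
  fix z u1 u2 k
  assume u: "u1 \<in> space SR z" "u2 \<in> space SR z" and eq: "app SR J sfx z u1 = app SR J sfx z u2"
  show "u1 k = u2 k"
  proof (cases "k \<in> bas SR z")
    case True
    then have k: "k \<le> length pth" "start (drop k pth) = z" by (auto simp: string_rep_bas start_drop)
    have "drop k pth \<in> suffixes" using k(1) by (auto simp: suffixes_def)
    then show ?thesis
      using fun_cong[OF eq, of "idx (drop k pth)"] k by (simp add: sfx_app_idx drop_in_paths_to)
  next
    case False
    then show ?thesis using u by (simp add: space_def)
  qed
qed

lemma sfx_image:
  assumes v: "v \<in> space J z" and supp: "\<forall>q\<in>P. q \<notin> suffixes \<longrightarrow> v (idx q) = 0"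
  shows "\<exists>u\<in>space SR z. app SR J sfx z u = v"
proof
  define u where "u = (\<lambda>k. if k \<in> bas SR z then v (idx (drop k pth)) else 0)"
  show "u \<in> space SR z" by (simp add: u_def space_def)
  show "app SR J sfx z u = v"
  proof
    fix t
    show "app SR J sfx z u t = v t"
    proof (cases "t \<in> idx ` P")
      case True
      then obtain q where q: "q \<in> P" "t = idx q" by auto
      have "v (idx q) = 0" if "start q \<noteq> z"
        using v q idx_in_J_bas[OF q(1)] that by (simp add: space_def)
      moreover have "length pth - length q \<in> bas SR z \<longleftrightarrow> start q = z" if "q \<in> suffixes"
        using that start_drop[of "length pth - length q"] by (auto simp: string_rep_bas suffixes_iff)
      ultimately show ?thesis
        using q supp by (auto simp: sfx_app_idx u_def suffixes_iff[of q])
    next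
      case False
      then show ?thesis using v by (auto simp: sfx_app_outside space_def J_bas)
    qed
  qed
qed

end

fun arm_paths :: "('a list \<times> nat) option \<Rightarrow> 'a list set" where
  "arm_paths None = {}"
| "arm_paths (Some (w, n)) = {drop k w | k. k \<le> n}"

context injective_model
begin

definition branch :: "'a \<Rightarrow> 'a list set" where
  "branch b = {q \<in> P. q \<noteq> [] \<and> last q = b}"

lemma same_last_arrow_suffix:
  "q1 \<in> P \<Longrightarrow> q2 \<in> P \<Longrightarrow> q1 \<noteq> [] \<Longrightarrow> q2 \<noteq> [] \<Longrightarrow> last q1 = last q2 \<Longrightarrow> length q1 \<le> length q2
   \<Longrightarrow> q1 = drop (length q2 - length q1) q2"
proof (induction q1)
  case Nil then show ?case by simp
next
  case (Cons a q1')
  show ?case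
  proof (cases "q1' = []")
    case True
    then have "a = last q2" using Cons.prems by simp
    moreover have "drop (length q2 - 1) q2 = [last q2]" using Cons.prems(4)
      by (metis One_nat_def append_butlast_last_id append_eq_conv_conj length_butlast)
    ultimately show ?thesis using True by simp
  next
    case False
    have q1'P: "q1' \<in> P" using paths_to_Cons[OF Cons.prems(1)] by simp
    define d where "d = length q2 - length (a # q1')"
    have IH: "q1' = drop (length q2 - length q1') q2"
      using Cons.IH[OF q1'P Cons.prems(2) False Cons.prems(4)] Cons.prems(5,6) False by simp
    have dl: "d < length q2" using Cons.prems(6) by (simp add: d_def)
    have e: "length q2 - length q1' = Suc d" using Cons.prems(6) by (simp add: d_def)
    have dd: "drop d q2 = q2 ! d # q1'" using IH e Cons_nth_drop_Suc[OF dl] by simp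
    have "q2 ! d # q1' \<in> P" using paths_to_drop[OF Cons.prems(2), of d] dd by simp
    then have "a = q2 ! d" using paths_to_Cons_unique[OF False Cons.prems(1)] by simp
    then show ?thesis using dd by (simp add: d_def)
  qed
qed

lemma single_arrow_in_paths_to: "b \<in> arrs Q \<Longrightarrow> tgt Q b = y \<Longrightarrow> [b] \<in> P"
proof -
  assume b: "b \<in> arrs Q" "tgt Q b = y"
  have "[b] \<notin> R" using relation_npath by fastforce
  then show ?thesis using b src_in_verts by (simp add: paths_to_def npath_Cons)
qed

definition longest :: "'a \<Rightarrow> 'a list" where
  "longest b = (ARG_MAX length q. q \<in> branch b)"

lemma longest:
  assumes b: "b \<in> arrs Q" "tgt Q b = y"
  shows longest_in_branch: "longest b \<in> branch b"
    and length_le_longest: "\<And>q. q \<in> branch b \<Longrightarrow> length q \<le> length (longest b)"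
proof -
  have "[b] \<in> branch b" using single_arrow_in_paths_to[OF b] by (simp add: branch_def)
  moreover have "\<forall>q. q \<in> branch b \<longrightarrow> length q < Suc (Max (length ` P))"
    using finite_paths_to by (auto simp: branch_def le_imp_less_Suc)
  ultimately show "longest b \<in> branch b" "\<And>q. q \<in> branch b \<Longrightarrow> length q \<le> length (longest b)"
    unfolding longest_def using arg_max_nat_lemma[of "\<lambda>q. q \<in> branch b" "[b]" length] by blast+
qed

lemma branch_eq:
  assumes b: "b \<in> arrs Q" "tgt Q b = y"
  shows "branch b = {drop k (longest b) | k. k < length (longest b)}"
proof
  have w: "longest b \<in> P" "longest b \<noteq> []" "last (longest b) = b"
    using longest_in_branch[OF b] by (auto simp: branch_def)
  show "branch b \<subseteq> {drop k (longest b) | k. k < length (longest b)}"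
  proof
    fix q assume q: "q \<in> branch b"
    then have q': "q \<in> P" "q \<noteq> []" "last q = b" by (auto simp: branch_def)
    have "q = drop (length (longest b) - length q) (longest b)"
      using same_last_arrow_suffix[OF q'(1) w(1) q'(2) w(2)] q'(3) w(3) length_le_longest[OF b q] by simp
    moreover have "length (longest b) - length q < length (longest b)" using q'(2) w(2) by simp
    ultimately show "q \<in> {drop k (longest b) | k. k < length (longest b)}" by blast
  qed
  show "{drop k (longest b) | k. k < length (longest b)} \<subseteq> branch b"
    using w paths_to_drop by (auto simp: branch_def)
qed

lemma longest_maximal: "b \<in> arrs Q \<Longrightarrow> tgt Q b = y \<Longrightarrow> a # longest b \<notin> P"
proof
  assume b: "b \<in> arrs Q" "tgt Q b = y" and a: "a # longest b \<in> P"
  have w: "longest b \<noteq> []" "last (longest b) = b" using longest_in_branch[OF b] by (auto simp: branch_def)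
  have "a # longest b \<in> branch b" using a w by (simp add: branch_def)
  then show False using length_le_longest[OF b] by fastforce
qed

text \<open>An arm Some (w, n) stands for the chain of suffixes drop k w, k \<le> n, of a path w that cannot be
  extended to the left inside P; None is the empty arm.\<close>

definition is_arm :: "('a list \<times> nat) option \<Rightarrow> bool" where
  "is_arm c = (case c of None \<Rightarrow> True | Some (w, n) \<Rightarrow> w \<in> P \<and> n < length w \<and> (\<forall>a. a # w \<notin> P))"

definition arm_rep :: "('a list \<times> nat) option \<Rightarrow> ('q,'a,'k) rep" where
  "arm_rep c = (case c of None \<Rightarrow> null_rep | Some (w, n) \<Rightarrow> string_rep Q (src Q (hd w)) (take n w))"

definition arm_path :: "('a list \<times> nat) option \<Rightarrow> nat \<Rightarrow> 'a list" where
  "arm_path c k = (case c of None \<Rightarrow> [] | Some (w, n) \<Rightarrow> drop k w)"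

lemma arm_rep_None_bas: "bas (arm_rep None) z = {}" by (simp add: arm_rep_def null_rep_def)

lemma is_arm_SomeD:
  assumes v: "is_arm (Some (w, n))"
  shows "is_path Q (src Q (hd w)) w" "w \<noteq> []" "w \<in> P" "n < length w"
proof -
  show wP: "w \<in> P" and "n < length w" using v by (auto simp: is_arm_def)
  then show wne: "w \<noteq> []" by auto
  show "is_path Q (src Q (hd w)) w" using paths_to_path[OF wP y_in_verts] wne by (simp add: path_start_def)
qed

lemma arm_path_vertex:
  assumes v: "is_arm (Some (w, n))" and k: "k \<le> n"
  shows "path_vertex Q (src Q (hd w)) (take n w) k = start (drop k w)"
proof -
  note cp = is_arm_SomeD[OF v]
  show ?thesis
  proof (cases k)
    case 0 then show ?thesis using cp by (simp add: path_vertex_def path_start_def)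
  next
    case (Suc k')
    have kl: "k < length w" using k cp(4) by simp
    have "src Q (w ! k) = path_vertex Q (src Q (hd w)) w k" by (rule src_nth_eq_path_vertex[OF cp(1) kl])
    moreover have "drop k w = w ! k # drop (Suc k) w" using kl by (simp add: Cons_nth_drop_Suc)
    ultimately show ?thesis using Suc k cp by (simp add: path_vertex_def)
  qed
qed

lemma arm_rep_bas:
  "is_arm (Some (w, n)) \<Longrightarrow> bas (arm_rep (Some (w, n))) z = {k. k \<le> n \<and> start (drop k w) = z}"
proof -
  assume v: "is_arm (Some (w, n))"
  have "length (take n w) = n" using is_arm_SomeD(4)[OF v] by simp
  then show ?thesis using arm_path_vertex[OF v] by (auto simp: arm_rep_def string_rep_bas)
qed

lemma finite_arm_rep_bas: "finite (bas (arm_rep c) z)"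
  by (cases c) (auto simp: arm_rep_def null_rep_def finite_string_rep_bas)

lemma arm_string_notin_relations:
  assumes "is_arm (Some (w, n))"
  shows "take n w \<notin> R"
proof
  assume r: "take n w \<in> R"
  note cp = is_arm_SomeD[OF assms]
  have "is_npath Q w" using is_path_npath[OF cp(1) cp(2)] .
  moreover have "w \<notin> R" using cp(3) cp(2) by (simp add: paths_to_def)
  ultimately show False using relation_closed[OF r, of "[]" "drop n w"] by simp
qed

lemma arm_rep_is_rep: "is_arm c \<Longrightarrow> is_rep Q R (arm_rep c)"
proof (cases c)
  case None
  then show ?thesis using null_rep_is_rep relation_nonempty by (auto simp: arm_rep_def)
next
  case (Some a)
  then obtain w n where c: "c = Some (w, n)" by (cases a) auto
  assume "is_arm c"
  then have v: "is_arm (Some (w, n))" using c by simp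
  then show ?thesis
    using string_rep_is_rep[OF is_path_take[OF is_arm_SomeD(1)[OF v]] arm_string_notin_relations[OF v]] c
    by (simp add: arm_rep_def)
qed

lemma arm_rep_directed: "is_arm c \<Longrightarrow> zero_rep Q (arm_rep c) \<or> directed_string_module Q R (arm_rep c)"
proof (cases c)
  case None
  then show ?thesis by (simp add: arm_rep_def zero_rep_null_rep)
next
  case (Some a)
  then obtain w n where c: "c = Some (w, n)" by (cases a) auto
  assume "is_arm c"
  then have v: "is_arm (Some (w, n))" using c by simp
  have "isomorphic Q (arm_rep c) (arm_rep c)"
    by (rule isomorphic_refl) (simp add: finite_arm_rep_bas)
  then have "isomorphic Q (arm_rep c) (string_rep Q (src Q (hd w)) (take n w))"
    using c by (simp add: arm_rep_def)
  then show ?thesis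
    using is_path_take[OF is_arm_SomeD(1)[OF v]] arm_string_notin_relations[OF v]
    unfolding directed_string_module_def by blast
qed

lemma arm_path_props:
  assumes v: "is_arm c" and k: "k \<in> bas (arm_rep c) z"
  shows "arm_path c k \<in> arm_paths c" "arm_path c k \<in> P" "start (arm_path c k) = z"
proof -
  obtain w n where c: "c = Some (w, n)" using k by (cases c) (auto simp: arm_rep_None_bas)
  have kk: "k \<le> n" "start (drop k w) = z" using k arm_rep_bas[OF v[unfolded c]] c by auto
  show "arm_path c k \<in> arm_paths c" using kk c by (auto simp: arm_path_def)
  show "arm_path c k \<in> P"
    using c kk paths_to_drop is_arm_SomeD(3)[OF v[unfolded c]] by (simp add: arm_path_def)
  show "start (arm_path c k) = z" using c kk by (simp add: arm_path_def)
qed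

lemma arm_path_onto:
  assumes v: "is_arm c" and q: "q \<in> arm_paths c"
  shows "\<exists>k\<in>bas (arm_rep c) (start q). arm_path c k = q"
proof -
  obtain w n k where c: "c = Some (w, n)" and k: "k \<le> n" "q = drop k w"
    using q by (cases c) auto
  then show ?thesis using arm_rep_bas[OF v[unfolded c]] by (auto simp: arm_path_def)
qed

lemma arm_path_inj:
  assumes v: "is_arm c" and k: "k \<in> bas (arm_rep c) z" and k': "k' \<in> bas (arm_rep c) z'"
    and e: "arm_path c k = arm_path c k'"
  shows "k = k'"
proof -
  obtain w n where c: "c = Some (w, n)" using k by (cases c) (auto simp: arm_rep_None_bas)
  have "k \<le> n" "k' \<le> n" using k k' arm_rep_bas[OF v[unfolded c]] c by auto
  moreover have "n < length w" using is_arm_SomeD(4)[OF v[unfolded c]] .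
  moreover have "length (drop k w) = length (drop k' w)" using e c by (simp add: arm_path_def)
  ultimately show ?thesis by simp
qed

lemma Cons_drop_arm_in_paths_to_iff:
  assumes v: "is_arm (Some (w, n))" and k: "k < length w"
  shows "a # drop k w \<in> P \<longleftrightarrow> 0 < k \<and> w ! (k - 1) = a"
proof
  assume aw: "a # drop k w \<in> P"
  show "0 < k \<and> w ! (k - 1) = a"
  proof (cases k)
    case 0
    then show ?thesis using aw v by (simp add: is_arm_def)
  next
    case (Suc k')
    then have "w ! k' # drop k w \<in> P"
      using paths_to_drop[OF is_arm_SomeD(3)[OF v], of k'] k by (simp add: Cons_nth_drop_Suc)
    then show ?thesis using paths_to_Cons_unique[OF _ aw] k Suc by fastforce
  qed
next
  assume "0 < k \<and> w ! (k - 1) = a"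
  then have "drop (k - 1) w = a # drop k w" using k Cons_nth_drop_Suc[of "k - 1" w] by simp
  then show "a # drop k w \<in> P" using paths_to_drop[OF is_arm_SomeD(3)[OF v], of "k - 1"] by simp
qed

lemma arm_rep_act:
  fixes u :: "nat \<Rightarrow> 'k"
  assumes v: "is_arm c" and k: "k \<in> bas (arm_rep c) (tgt Q a)"
  shows "act Q (arm_rep c) a u k = (if a # arm_path c k \<in> P then u (k - 1) else 0)"
    and "a # arm_path c k \<in> P
      \<Longrightarrow> 0 < k \<and> arm_path c (k - 1) = a # arm_path c k \<and> k - 1 \<in> bas (arm_rep c) (src Q a)"
proof -
  obtain w n where c: "c = Some (w, n)" using k by (cases c) (auto simp: arm_rep_None_bas)
  note v' = v[unfolded c]
  have kn: "k \<le> n" "start (drop k w) = tgt Q a" using k arm_rep_bas[OF v'] c by auto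
  have kw: "k < length w" using kn is_arm_SomeD(4)[OF v'] by simp
  have "act Q (arm_rep c) a u k
      = (if 0 < k \<and> k \<le> length (take n w) \<and> take n w ! (k - 1) = a then u (k - 1) else 0)"
    using string_rep_act[OF is_path_take[OF is_arm_SomeD(1)[OF v']], where a = a and u = u and k = k] c
    by (simp add: arm_rep_def)
  moreover have "(0 < k \<and> k \<le> length (take n w) \<and> take n w ! (k - 1) = a) \<longleftrightarrow> a # arm_path c k \<in> P"
  proof (cases "0 < k")
    case True
    then have "take n w ! (k - 1) = w ! (k - 1)" using kn by simp
    then show ?thesis
      using True Cons_drop_arm_in_paths_to_iff[OF v' kw] kn kw c by (simp add: arm_path_def)
  qed (use Cons_drop_arm_in_paths_to_iff[OF v' kw] c in \<open>simp add: arm_path_def\<close>)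
  ultimately show "act Q (arm_rep c) a u k = (if a # arm_path c k \<in> P then u (k - 1) else 0)"
    by simp
  assume "a # arm_path c k \<in> P"
  then have ka: "0 < k" "w ! (k - 1) = a"
    using Cons_drop_arm_in_paths_to_iff[OF v' kw] c by (auto simp: arm_path_def)
  then have d: "drop (k - 1) w = a # drop k w" using kw Cons_nth_drop_Suc[of "k - 1" w] by simp
  then have "k - 1 \<in> bas (arm_rep c) (src Q a)" using arm_rep_bas[OF v'] kn c by simp
  then show "0 < k \<and> arm_path c (k - 1) = a # arm_path c k \<and> k - 1 \<in> bas (arm_rep c) (src Q a)"
    using ka d c by (simp add: arm_path_def)
qed

end

section \<open>Splitting the complement of the suffixes into two arms\<close>

lemma card_le_two_cases:
  assumes "finite B" "card B \<le> 2"
  obtains "B = {}" | b where "B = {b}" | b1 b2 where "b1 \<noteq> b2" "B = {b1, b2}"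
proof -
  consider "card B = 0" | "card B = 1" | "card B = 2" using assms(2) by linarith
  then show ?thesis
  proof cases
    case 1
    then show ?thesis using assms(1) that(1) by simp
  next
    case 2
    then show ?thesis using that(2) card_1_singletonE by blast
  next
    case 3
    then show ?thesis using that(3) card_2_iff by metis
  qed
qed

context suffix_embedding
begin

definition arm_len :: "'a \<Rightarrow> nat" where
  "arm_len b = (if pth \<noteq> [] \<and> b = last pth then length (longest b) - length pth else length (longest b))"

definition arm :: "'a \<Rightarrow> ('a list \<times> nat) option" where
  "arm b = (if arm_len b = 0 then None else Some (longest b, arm_len b - 1))"

lemma drop_longest_in_suffixes_iff:
  assumes b: "b \<in> arrs Q" "tgt Q b = y" and k: "k < length (longest b)"
  shows "drop k (longest b) \<in> suffixes \<longleftrightarrow> arm_len b \<le> k"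
proof -
  let ?w = "longest b"
  have w: "?w \<in> P" "?w \<noteq> []" "last ?w = b" using longest_in_branch[OF b] by (auto simp: branch_def)
  show ?thesis
  proof (cases "pth \<noteq> [] \<and> b = last pth")
    case True
    have "pth \<in> branch b" using True drop_in_paths_to[of 0] by (simp add: branch_def)
    then have lp: "length pth \<le> length ?w" by (rule length_le_longest[OF b])
    define k0 where "k0 = length ?w - length pth"
    have pth_eq: "pth = drop k0 ?w"
      using same_last_arrow_suffix[OF drop_in_paths_to[of 0] w(1)] True w lp by (simp add: k0_def)
    have "drop k ?w \<in> suffixes \<longleftrightarrow> k0 \<le> k"
    proof
      assume "drop k ?w \<in> suffixes"
      then obtain j where j: "j \<le> length pth" "drop k ?w = drop j pth" by (auto simp: suffixes_def)
      then have "drop k ?w = drop (k0 + j) ?w" using pth_eq by (simp add: add.commute)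
      then have "length ?w - k = length ?w - (k0 + j)" by (metis length_drop)
      then show "k0 \<le> k" using j(1) k lp by (simp add: k0_def)
    next
      assume "k0 \<le> k"
      then have "drop k ?w = drop (k - k0) pth" using pth_eq by (simp add: add.commute)
      then show "drop k ?w \<in> suffixes" using k lp by (auto simp: suffixes_def k0_def)
    qed
    then show ?thesis using True by (simp add: arm_len_def k0_def)
  next
    case False
    have "drop k ?w \<notin> suffixes"
    proof
      assume "drop k ?w \<in> suffixes"
      then obtain j where j: "j \<le> length pth" "drop k ?w = drop j pth" by (auto simp: suffixes_def)
      then have ne: "drop j pth \<noteq> []" using k by (metis drop_eq_Nil not_le)
      then have "pth \<noteq> []" by auto
      moreover have "last (drop j pth) = last pth" using ne by simp
      moreover have "last (drop k ?w) = b" using k w by simp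
      ultimately show False using False j by simp
    qed
    moreover have "arm_len b = length ?w" using False by (auto simp: arm_len_def)
    ultimately show ?thesis using k by simp
  qed
qed

lemma branch_minus_suffixes:
  assumes b: "b \<in> arrs Q" "tgt Q b = y"
  shows "branch b - suffixes = {drop k (longest b) | k. k < arm_len b}"
proof -
  have len: "arm_len b \<le> length (longest b)" by (simp add: arm_len_def)
  show ?thesis
    unfolding branch_eq[OF b]
  proof (intro equalityI subsetI)
    fix q
    assume "q \<in> {drop k (longest b) | k. k < length (longest b)} - suffixes"
    then obtain k where "k < length (longest b)" "q = drop k (longest b)" "q \<notin> suffixes" by blast
    then show "q \<in> {drop k (longest b) | k. k < arm_len b}"
      using drop_longest_in_suffixes_iff[OF b] by auto
  next
    fix q
    assume "q \<in> {drop k (longest b) | k. k < arm_len b}"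
    then obtain k where "k < arm_len b" "q = drop k (longest b)" by blast
    then show "q \<in> {drop k (longest b) | k. k < length (longest b)} - suffixes"
      using drop_longest_in_suffixes_iff[OF b] len by auto
  qed
qed

lemma arm_paths_arm: "b \<in> arrs Q \<Longrightarrow> tgt Q b = y \<Longrightarrow> arm_paths (arm b) = branch b - suffixes"
proof -
  assume b: "b \<in> arrs Q" "tgt Q b = y"
  show ?thesis
  proof (cases "arm_len b = 0")
    case True
    then show ?thesis using branch_minus_suffixes[OF b] by (simp add: arm_def)
  next
    case False
    then have "k \<le> arm_len b - 1 \<longleftrightarrow> k < arm_len b" for k by linarith
    then have "{drop k (longest b) | k. k \<le> arm_len b - 1} = {drop k (longest b) | k. k < arm_len b}"
      by simp
    then show ?thesis using branch_minus_suffixes[OF b] False by (simp add: arm_def)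
  qed
qed

lemma is_arm_arm: "b \<in> arrs Q \<Longrightarrow> tgt Q b = y \<Longrightarrow> is_arm (arm b)"
proof -
  assume b: "b \<in> arrs Q" "tgt Q b = y"
  have w: "longest b \<in> P" "longest b \<noteq> []" using longest_in_branch[OF b] by (auto simp: branch_def)
  have "arm_len b \<le> length (longest b)" by (simp add: arm_len_def)
  then show ?thesis using w longest_maximal[OF b] by (auto simp: arm_def is_arm_def)
qed

lemma paths_minus_suffixes: "P - suffixes = (\<Union>b\<in>{b\<in>arrs Q. tgt Q b = y}. branch b - suffixes)"
proof -
  have "q \<in> P \<Longrightarrow> q \<noteq> [] \<Longrightarrow> last q \<in> arrs Q \<and> tgt Q (last q) = y" for q
    by (auto simp: paths_to_def is_npath_def is_path_def)
  then show ?thesis using Nil_in_suffixes by (auto simp: branch_def)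
qed

lemma two_arms:
  "\<exists>c1 c2. is_arm c1 \<and> is_arm c2 \<and> P - suffixes = arm_paths c1 \<union> arm_paths c2
     \<and> arm_paths c1 \<inter> arm_paths c2 = {}"
proof -
  let ?B = "{b\<in>arrs Q. tgt Q b = y}"
  have B: "finite ?B" "card ?B \<le> 2"
    using finite_arrs string_algebra y_in_verts by (simp_all add: string_algebra_def)
  have split: "P - suffixes = (\<Union>b\<in>?B. arm_paths (arm b))"
    using paths_minus_suffixes arm_paths_arm by simp
  show ?thesis
  proof (cases rule: card_le_two_cases[OF B])
    case 1
    then have "P - suffixes = {}" using split by auto
    then show ?thesis by (intro exI[of _ None]) (simp add: is_arm_def)
  next
    case (2 b)
    then show ?thesis
      using split is_arm_arm[of b] by (intro exI[of _ "arm b"] exI[of _ None]) (auto simp: is_arm_def)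
  next
    case (3 b1 b2)
    then have "b1 \<in> arrs Q" "tgt Q b1 = y" "b2 \<in> arrs Q" "tgt Q b2 = y" by auto
    then have "arm_paths (arm b1) \<inter> arm_paths (arm b2) = {}"
      using arm_paths_arm[of b1] arm_paths_arm[of b2] 3(1) by (auto simp: branch_def)
    then show ?thesis
      using 3 split is_arm_arm[of b1] is_arm_arm[of b2]
      by (intro exI[of _ "arm b1"] exI[of _ "arm b2"]) auto
  qed
qed

end

section \<open>The injective envelope is the model\<close>

locale envelope = suffix_embedding Q R y idx J x0 pth
  for Q :: "('q,'a) quiver" and R y idx and J :: "('q,'a,'k::field) rep" and x0 pth +
  fixes M E :: "('q,'a,'k) rep" and i T :: "'q \<Rightarrow> nat \<Rightarrow> nat \<Rightarrow> 'k"
  assumes M_is_rep: "is_rep Q R M" and envelope: "injective_envelope Q R M E i"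
    and T_hom: "is_hom Q M SR T" and T_mono: "hom_mono Q M SR T" and T_epi: "hom_epi Q M SR T"
begin

lemma E_is_rep: "is_rep Q R E"
  using envelope by (simp add: injective_envelope_def injective_rep_def)

lemma i_hom: "is_hom Q M E i"
  using envelope by (simp add: injective_envelope_def essential_mono_def)

lemma i_mono: "hom_mono Q M E i"
  using envelope by (simp add: injective_envelope_def essential_mono_def)

lemma finite_E_bas: "finite (bas E z)"
  using E_is_rep by (simp add: is_rep_def)

definition emb :: "'q \<Rightarrow> nat \<Rightarrow> nat \<Rightarrow> 'k" where
  "emb = hom_comp SR sfx T"

lemma emb_app: "app M J emb z m = app SR J sfx z (app M SR T z m)"
  by (simp add: emb_def app_hom_comp)

lemma emb_hom: "is_hom Q M J emb"
  unfolding emb_def by (rule is_hom_comp[OF T_hom sfx_hom])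

lemma emb_mono: "hom_mono Q M J emb"
  unfolding emb_def by (rule hom_mono_comp[OF T_mono sfx_mono])

lemma emb_image:
  assumes z: "z \<in> verts Q" and v: "v \<in> space J z"
    and supp: "\<forall>q\<in>P. q \<notin> suffixes \<longrightarrow> v (idx q) = 0"
  shows "\<exists>m\<in>space M z. app M J emb z m = v"
proof -
  obtain u where u: "u \<in> space SR z" "app SR J sfx z u = v" using sfx_image[OF v supp] by blast
  moreover have "app M SR T z ` space M z = space SR z" using T_epi z by (simp add: hom_epi_def)
  ultimately obtain m where "m \<in> space M z" "u = app M SR T z m" by (metis imageE)
  then show ?thesis using u(2) by (metis emb_app)
qed

lemma emb_support: "q \<in> P \<Longrightarrow> q \<notin> suffixes \<Longrightarrow> app M J emb z m (idx q) = 0"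
  by (simp add: emb_app sfx_app_idx)

text \<open>nil_coeff extends the functional "coordinate of the trivial path of emb m" from the image of
  M at y to all of E at y, via a linear left inverse of i.\<close>

definition left_inv :: "(nat \<Rightarrow> 'k) \<Rightarrow> (nat \<Rightarrow> 'k)" where
  "left_inv = (SOME G. (\<forall>u w. G (\<lambda>i. u i + w i) = (\<lambda>i. G u i + G w i))
     \<and> (\<forall>c u. G (\<lambda>i. c * u i) = (\<lambda>i. c * G u i)) \<and> (\<forall>v\<in>space M y. G (app M E i y v) = v))"

lemma left_inv_props:
  shows left_inv_add: "\<And>u w. left_inv (\<lambda>i. u i + w i) = (\<lambda>i. left_inv u i + left_inv w i)"
    and left_inv_scale: "\<And>c u. left_inv (\<lambda>i. c * u i) = (\<lambda>i. c * left_inv u i)"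
    and left_inv_i: "\<And>v. v \<in> space M y \<Longrightarrow> left_inv (app M E i y v) = v"
proof -
  have "inj_on (app M E i y) (space M y)" using i_mono y_in_verts by (simp add: hom_mono_def)
  then have "\<exists>G. (\<forall>u w. G (\<lambda>i. u i + w i) = (\<lambda>i. G u i + G w i))
     \<and> (\<forall>c u. G (\<lambda>i. c * u i) = (\<lambda>i. c * G u i)) \<and> (\<forall>v\<in>space M y. G (app M E i y v) = v)"
    by (intro linear_left_inverse_exists) (auto simp: app_add app_scale space_def)
  from someI_ex[OF this] show "\<And>u w. left_inv (\<lambda>i. u i + w i) = (\<lambda>i. left_inv u i + left_inv w i)"
    and "\<And>c u. left_inv (\<lambda>i. c * u i) = (\<lambda>i. c * left_inv u i)"
    and "\<And>v. v \<in> space M y \<Longrightarrow> left_inv (app M E i y v) = v"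
    unfolding left_inv_def[symmetric] by auto
qed

definition nil_coeff :: "(nat \<Rightarrow> 'k) \<Rightarrow> 'k" where
  "nil_coeff w = app M J emb y (left_inv w) (idx [])"

lemma nil_coeff_sum:
  assumes "finite L"
  shows "nil_coeff (\<lambda>i. \<Sum>l\<in>L. c l * f l i) = (\<Sum>l\<in>L. c l * nil_coeff (f l))"
proof -
  have "left_inv (\<lambda>i. \<Sum>l\<in>L. c l * f l i) = (\<lambda>j. \<Sum>l\<in>L. left_inv (\<lambda>i. c l * f l i) j)"
    by (rule additive_sum[OF left_inv_add left_inv_scale assms])
  also have "\<dots> = (\<lambda>j. \<Sum>l\<in>L. c l * left_inv (f l) j)" by (simp add: left_inv_scale)
  finally show ?thesis by (simp add: nil_coeff_def app_sum_scale)
qed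

lemma nil_coeff_zero: "nil_coeff (\<lambda>_. 0) = 0"
  using nil_coeff_sum[of "{}"] by simp

lemma nil_coeff_i: "m \<in> space M y \<Longrightarrow> nil_coeff (app M E i y m) = app M J emb y m (idx [])"
  by (simp add: nil_coeff_def left_inv_i)

definition toJ :: "'q \<Rightarrow> nat \<Rightarrow> nat \<Rightarrow> 'k" where
  "toJ z t l = (if t \<in> bas J z then nil_coeff (act_path Q E (the_inv_into P idx t) (unit_vec l)) else 0)"

lemma toJ_app_idx:
  assumes v: "v \<in> space E z" and q: "q \<in> P" "start q = z"
  shows "app E J toJ z v (idx q) = nil_coeff (act_path Q E q v)"
proof -
  have "app E J toJ z v (idx q) = (\<Sum>l\<in>bas E z. nil_coeff (act_path Q E q (unit_vec l)) * v l)"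
    using q idx_in_J_bas by (simp add: app_def toJ_def the_inv_into_f_f[OF inj_idx])
  also have "\<dots> = nil_coeff (\<lambda>j. \<Sum>l\<in>bas E z. v l * act_path Q E q (unit_vec l) j)"
    by (simp add: nil_coeff_sum finite_E_bas mult.commute)
  also have "(\<lambda>j. \<Sum>l\<in>bas E z. v l * act_path Q E q (unit_vec l) j)
      = act_path Q E q (\<lambda>i. \<Sum>l\<in>bas E z. v l * unit_vec l i)"
    by (simp add: act_path_sum act_path_scale)
  also have "(\<lambda>i. \<Sum>l\<in>bas E z. v l * unit_vec l i) = v"
    using unit_vec_expansion[OF finite_E_bas v] by simp
  finally show ?thesis .
qed

lemma toJ_hom: "is_hom Q E J toJ"
  unfolding is_hom_def
proof (intro ballI ext)
  fix a v t
  assume a: "a \<in> arrs Q" and v: "v \<in> space E (src Q a)"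
  show "app E J toJ (tgt Q a) (act Q E a v) t = act Q J a (app E J toJ (src Q a) v) t"
  proof (cases "t \<in> bas J (tgt Q a)")
    case False
    then have "act Q J a (app E J toJ (src Q a) v) t = 0"
      using J_act idx_in_J_bas by (cases "t \<in> idx ` P") (auto simp: J_act_outside)
    then show ?thesis using False by (simp add: app_outside)
  next
    case True
    then obtain q where q: "q \<in> P" "start q = tgt Q a" "t = idx q" by (auto simp: J_bas)
    have "a # q \<in> P \<Longrightarrow> app E J toJ (src Q a) v (idx (a # q)) = nil_coeff (act_path Q E (a # q) v)"
      using toJ_app_idx[OF v] by simp
    moreover have "act_path Q E (a # q) v = (\<lambda>_. 0)" if "a # q \<notin> P"
      using Cons_notin_paths_to[OF a q(1,2) that] E_is_rep v by (auto simp: is_rep_def)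
    ultimately show ?thesis
      using toJ_app_idx[OF act_in_space q(1,2)] J_act[OF q(1)] q nil_coeff_zero by auto
  qed
qed

lemma toJ_i:
  assumes m: "m \<in> space M z"
  shows "app E J toJ z (app M E i z m) = app M J emb z m"
proof
  fix t
  show "app E J toJ z (app M E i z m) t = app M J emb z m t"
  proof (cases "t \<in> bas J z")
    case True
    then obtain q where q: "q \<in> P" "start q = z" "t = idx q" by (auto simp: J_bas idx_in_J_bas)
    have pq: "is_path Q z q" "path_end Q z q = y" using paths_to_path[OF q(1) y_in_verts] q(2) by auto
    have "app E J toJ z (app M E i z m) t = nil_coeff (act_path Q E q (app M E i z m))"
      using toJ_app_idx[OF app_in_space q(1,2)] q(3) by simp
    also have "act_path Q E q (app M E i z m) = app M E i y (act_path Q M q m)"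
      using hom_act_path[OF i_hom pq(1) m] pq(2) by simp
    also have "nil_coeff (app M E i y (act_path Q M q m)) = app M J emb y (act_path Q M q m) (idx [])"
      using nil_coeff_i act_path_in_space[OF pq(1) m] pq(2) by simp
    also have "app M J emb y (act_path Q M q m) = act_path Q J q (app M J emb z m)"
      using hom_act_path[OF emb_hom pq(1) m] pq(2) by simp
    also have "act_path Q J q (app M J emb z m) (idx []) = app M J emb z m t"
      using J_coord_eq_act_path[OF q(1)] q(3) by simp
    finally show ?thesis .
  qed (simp add: app_outside)
qed

lemma toJ_mono: "hom_mono Q E J toJ"
proof (rule essential_mono_hom_mono[OF _ toJ_hom])
  show "essential_mono Q M E i" using envelope by (simp add: injective_envelope_def)
  have "app M J (hom_comp E toJ i) z m = app M J emb z m" if "m \<in> space M z" for z m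
    using toJ_i[OF that] by (simp add: app_hom_comp)
  then show "hom_mono Q M J (hom_comp E toJ i)"
    using emb_mono unfolding hom_mono_def inj_on_def by metis
qed

text \<open>Injectivity of E extends i along emb to a morphism fromJ; then retr = toJ \<circ> fromJ maps J
  into the image of toJ and fixes the basis vector of the trivial path.\<close>

definition fromJ :: "'q \<Rightarrow> nat \<Rightarrow> nat \<Rightarrow> 'k" where
  "fromJ = (SOME g. is_hom Q J E g
     \<and> (\<forall>x\<in>verts Q. \<forall>v\<in>space M x. app J E g x (app M J emb x v) = app M E i x v))"

lemma fromJ_props:
  shows fromJ_hom: "is_hom Q J E fromJ"
    and fromJ_emb: "\<And>x v. x \<in> verts Q \<Longrightarrow> v \<in> space M x \<Longrightarrow> app J E fromJ x (app M J emb x v) = app M E i x v"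
proof -
  have "injective_rep Q R E" using envelope by (simp add: injective_envelope_def)
  then have "\<exists>g. is_hom Q J E g \<and> (\<forall>x\<in>verts Q. \<forall>v\<in>space M x. app J E g x (app M J emb x v) = app M E i x v)"
    unfolding injective_rep_def
    using M_is_rep J_is_rep emb_hom emb_mono i_hom
    by (elim conjE allE[of _ M] allE[of _ J] allE[of _ emb] allE[of _ i]) simp
  from someI_ex[OF this] show "is_hom Q J E fromJ"
    and "\<And>x v. x \<in> verts Q \<Longrightarrow> v \<in> space M x \<Longrightarrow> app J E fromJ x (app M J emb x v) = app M E i x v"
    unfolding fromJ_def[symmetric] by auto
qed

definition retr :: "'q \<Rightarrow> (nat \<Rightarrow> 'k) \<Rightarrow> (nat \<Rightarrow> 'k)" where
  "retr z w = app E J toJ z (app J E fromJ z w)"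

lemma retr_in_image: "retr z w \<in> app E J toJ z ` space E z"
  unfolding retr_def by (rule imageI[OF app_in_space])

lemma retr_act_path:
  "is_path Q z r \<Longrightarrow> w \<in> space J z \<Longrightarrow> act_path Q J r (retr z w) = retr (path_end Q z r) (act_path Q J r w)"
  unfolding retr_def using hom_act_path[OF toJ_hom _ app_in_space] hom_act_path[OF fromJ_hom] by simp

lemma retr_unit_vec_Nil: "retr y (unit_vec (idx [])) = unit_vec (idx [])"
proof -
  have sp: "unit_vec (idx []) \<in> space J y" using idx_in_J_bas[of "[]" y] by (intro unit_vec_in_space) simp
  have "\<forall>q\<in>P. q \<notin> suffixes \<longrightarrow> unit_vec (idx []) (idx q) = (0::'k)"
    using Nil_in_suffixes idx_eq_iff[OF _ Nil_paths_to] by (auto simp: unit_vec_def)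
  then obtain m where m: "m \<in> space M y" "app M J emb y m = unit_vec (idx [])"
    using emb_image[OF y_in_verts sp] by blast
  show ?thesis using fromJ_emb[OF y_in_verts m(1)] toJ_i[OF m(1)] m(2) by (simp add: retr_def)
qed

lemma retr_unit_vec_coord:
  assumes q: "q \<in> P" and r: "r \<in> P" "start r = start q"
  shows "retr (start q) (unit_vec (idx q)) (idx r)
    = (if \<exists>q''. q = r @ q'' then retr y (unit_vec (idx (drop (length r) q))) (idx []) else 0)"
proof -
  have pr: "is_path Q (start q) r" "path_end Q (start q) r = y"
    using paths_to_path[OF r(1) y_in_verts] r(2) by auto
  have sp: "unit_vec (idx q) \<in> space J (start q)" by (rule unit_vec_in_space) (simp add: idx_in_J_bas q)
  have "retr (start q) (unit_vec (idx q)) (idx r)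
      = act_path Q J r (retr (start q) (unit_vec (idx q))) (idx [])"
    by (rule J_coord_eq_act_path[OF r(1)])
  also have "\<dots> = retr y (act_path Q J r (unit_vec (idx q))) (idx [])"
    using retr_act_path[OF pr(1) sp] pr(2) by simp
  finally show ?thesis using J_act_path_unit_vec[OF q, of r] by (simp add: retr_def app_zero)
qed

lemma retr_unit_vec_long_coord:
  assumes q: "q \<in> P" and r: "r \<in> P" "start r = start q" "length q \<le> length r"
  shows "retr (start q) (unit_vec (idx q)) (idx r) = unit_vec (idx q) (idx r)"
proof (cases "r = q")
  case True
  then show ?thesis using retr_unit_vec_coord[OF q r(1,2)] retr_unit_vec_Nil by (simp add: unit_vec_def)
next
  case False
  then have "\<not> (\<exists>q''. q = r @ q'')" using r(3) by auto
  then show ?thesis using retr_unit_vec_coord[OF q r(1,2)] False idx_eq_iff[OF q r(1)]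
    by (auto simp: unit_vec_def)
qed

lemma unit_vec_in_image: "q \<in> P \<Longrightarrow> unit_vec (idx q) \<in> app E J toJ (start q) ` space E (start q)"
proof (induction "length q" arbitrary: q rule: less_induct)
  case less
  let ?z = "start q" and ?Img = "app E J toJ (start q) ` space E (start q)"
  have "unit_vec (idx q) \<in> space J ?z" by (rule unit_vec_in_space) (simp add: idx_in_J_bas less.prems)
  then have d_space: "(\<lambda>t. unit_vec (idx q) t - retr ?z (unit_vec (idx q)) t) \<in> space J ?z"
    by (intro space_diff) (simp_all add: retr_def app_in_space)
  define Rs where "Rs = {r\<in>P. start r = ?z \<and> length r < length q}"
  define d where "d = (\<lambda>t. unit_vec (idx q) t - retr ?z (unit_vec (idx q)) t)"
  have "d = (\<lambda>j. \<Sum>r\<in>Rs. d (idx r) * unit_vec (idx r) j)"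
  proof (rule J_expansion_on)
    show "d \<in> space J ?z" using d_space by (simp add: d_def)
    show "Rs \<subseteq> {r\<in>P. start r = ?z}" by (auto simp: Rs_def)
    fix r
    assume "r \<in> P" "start r = ?z" "r \<notin> Rs"
    then show "d (idx r) = 0"
      using retr_unit_vec_long_coord[OF less.prems, of r] by (simp add: d_def Rs_def)
  qed
  also have "\<dots> \<in> ?Img"
  proof (rule image_app_sum_scale)
    show "finite Rs" using finite_paths_to by (simp add: Rs_def)
    show "unit_vec (idx r) \<in> ?Img" if "r \<in> Rs" for r
      using less.hyps[of r] that by (auto simp: Rs_def)
  qed
  finally have "(\<lambda>i. retr ?z (unit_vec (idx q)) i + d i) \<in> ?Img"
    by (rule image_app_add[OF retr_in_image])
  then show ?case by (simp add: d_def)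
qed

lemma toJ_epi: "hom_epi Q E J toJ"
  unfolding hom_epi_def
proof (intro ballI equalityI subsetI)
  fix z w
  assume w: "w \<in> space J z"
  have "w = (\<lambda>j. \<Sum>t\<in>bas J z. w t * unit_vec t j)" using unit_vec_expansion[OF finite_J_bas w] .
  also have "\<dots> \<in> app E J toJ z ` space E z"
  proof (rule image_app_sum_scale[OF finite_J_bas])
    fix t
    assume "t \<in> bas J z"
    then obtain q where "q \<in> P" "start q = z" "t = idx q" by (auto simp: J_bas)
    then show "unit_vec t \<in> app E J toJ z ` space E z" using unit_vec_in_image by blast
  qed
  finally show "w \<in> app E J toJ z ` space E z" .
qed (auto simp: app_in_space)

end

section \<open>The cokernel\<close>

locale cokernel = envelope Q R y idx J x0 pth M E i T
  for Q :: "('q,'a) quiver" and R y idx and J :: "('q,'a,'k::field) rep" and x0 pth M E i T +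
  fixes C :: "('q,'a,'k) rep" and p :: "'q \<Rightarrow> nat \<Rightarrow> nat \<Rightarrow> 'k"
    and c1 c2 :: "('a list \<times> nat) option"
  assumes C_is_rep: "is_rep Q R C" and p_hom: "is_hom Q E C p" and p_epi: "hom_epi Q E C p"
    and p_kernel: "\<forall>x\<in>verts Q. {v \<in> space E x. app E C p x v = (\<lambda>_. 0)} = app M E i x ` space M x"
    and arm1: "is_arm c1" and arm2: "is_arm c2"
    and arms_cover: "P - suffixes = arm_paths c1 \<union> arm_paths c2"
    and arms_disjoint: "arm_paths c1 \<inter> arm_paths c2 = {}"
begin

abbreviation D :: "('q,'a,'k) rep" where "D \<equiv> dsum (arm_rep c1) (arm_rep c2)"

definition arm_of :: "nat \<Rightarrow> ('a list \<times> nat) option" where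
  "arm_of t = (if even t then c1 else c2)"

definition D_path :: "nat \<Rightarrow> 'a list" where
  "D_path t = arm_path (arm_of t) (t div 2)"

lemma is_arm_arm_of: "is_arm (arm_of t)"
  using arm1 arm2 by (simp add: arm_of_def)

lemma D_bas: "t \<in> bas D z \<longleftrightarrow> t div 2 \<in> bas (arm_rep (arm_of t)) z"
  by (cases "even t") (simp_all add: dsum_bas_iff arm_of_def)

lemma finite_D_bas: "finite (bas D z)"
  by (simp add: dsum_bas finite_arm_rep_bas)

lemma D_path_props:
  assumes t: "t \<in> bas D z"
  shows "D_path t \<in> P" "start (D_path t) = z" "D_path t \<in> arm_paths (arm_of t)"
    and "D_path t \<notin> suffixes"
proof -
  note props = arm_path_props[OF is_arm_arm_of t[unfolded D_bas]]
  show "D_path t \<in> P" "start (D_path t) = z" "D_path t \<in> arm_paths (arm_of t)"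
    using props by (simp_all add: D_path_def)
  then show "D_path t \<notin> suffixes"
    using arms_cover by (cases "even t") (auto simp: arm_of_def)
qed

lemma D_path_inj:
  assumes t: "t \<in> bas D z" and t': "t' \<in> bas D z'" and eq: "D_path t = D_path t'"
  shows "t = t'"
proof -
  have parity: "even t \<longleftrightarrow> even t'"
    using D_path_props(3)[OF t] D_path_props(3)[OF t'] eq arms_disjoint
    by (cases "even t"; cases "even t'") (auto simp: arm_of_def)
  then have "arm_of t' = arm_of t" by (simp add: arm_of_def)
  then have "t div 2 = t' div 2"
    using arm_path_inj[OF is_arm_arm_of[of t] t[unfolded D_bas]] t'[unfolded D_bas] eq
    by (simp add: D_path_def)
  with parity show ?thesis by presburger
qed

definition proj :: "'q \<Rightarrow> nat \<Rightarrow> nat \<Rightarrow> 'k" where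
  "proj z t l = (if t \<in> bas D z \<and> l = idx (D_path t) then 1 else 0)"

lemma proj_app: "app J D proj z v t = (if t \<in> bas D z then v (idx (D_path t)) else 0)"
proof (cases "t \<in> bas D z")
  case True
  have "idx (D_path t) \<in> bas J z" using D_path_props[OF True] idx_in_J_bas by simp
  have "(\<Sum>l\<in>bas J z. proj z t l * v l) = (\<Sum>l\<in>bas J z. if l = idx (D_path t) then v l else 0)"
    using True by (intro sum.cong) (auto simp: proj_def)
  also have "\<dots> = v (idx (D_path t))"
    using \<open>idx (D_path t) \<in> bas J z\<close> finite_J_bas by (simp add: sum.delta')
  finally have "(\<Sum>l\<in>bas J z. proj z t l * v l) = v (idx (D_path t))" .
  then show ?thesis using True by (simp add: app_def)
qed (simp add: app_def)

lemma proj_hom: "is_hom Q J D proj"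
  unfolding is_hom_def
proof (intro ballI ext)
  fix a v t
  assume a: "a \<in> arrs Q" and v: "v \<in> space J (src Q a)"
  show "app J D proj (tgt Q a) (act Q J a v) t = act Q D a (app J D proj (src Q a) v) t"
  proof (cases "t \<in> bas D (tgt Q a)")
    case True
    let ?c = "arm_of t" and ?k = "t div 2"
    have k: "?k \<in> bas (arm_rep ?c) (tgt Q a)" using True by (simp add: D_bas)
    have "act Q D a (app J D proj (src Q a) v) t
        = act Q (arm_rep ?c) a (\<lambda>k. app J D proj (src Q a) v (2 * k + t mod 2)) ?k"
      using dsum_act[OF finite_arm_rep_bas finite_arm_rep_bas] by (simp add: arm_of_def)
    also have "\<dots> = (if a # D_path t \<in> P then v (idx (a # D_path t)) else 0)"
    proof (cases "a # D_path t \<in> P")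
      case in_P: True
      note step = arm_rep_act(2)[OF is_arm_arm_of k in_P[unfolded D_path_def]]
      let ?t' = "2 * (?k - 1) + t mod 2"
      have "arm_of ?t' = ?c" by (simp add: arm_of_def)
      then have "?t' \<in> bas D (src Q a)" "D_path ?t' = a # D_path t"
        using step by (simp_all add: D_bas D_path_def)
      then show ?thesis
        using arm_rep_act(1)[OF is_arm_arm_of k] in_P by (simp add: proj_app D_path_def)
    qed (simp add: arm_rep_act(1)[OF is_arm_arm_of k] D_path_def)
    finally show ?thesis
      using True D_path_props[OF True] J_act by (simp add: proj_app)
  qed (simp add: proj_app act_outside)
qed

lemma proj_kernel:
  assumes v: "v \<in> space J z" and zero: "app J D proj z v = (\<lambda>_. 0)"
  shows "\<forall>q\<in>P. q \<notin> suffixes \<longrightarrow> v (idx q) = 0"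
proof (intro ballI impI)
  fix q
  assume q: "q \<in> P" "q \<notin> suffixes"
  show "v (idx q) = 0"
  proof (cases "start q = z")
    case True
    have "\<exists>t\<in>bas D z. D_path t = q"
    proof (cases "q \<in> arm_paths c1")
      case True
      then obtain k where "k \<in> bas (arm_rep c1) z" "arm_path c1 k = q"
        using arm_path_onto[OF arm1] \<open>start q = z\<close> by blast
      then show ?thesis by (intro bexI[of _ "2 * k"]) (simp_all add: D_bas D_path_def arm_of_def)
    next
      case False
      then have "q \<in> arm_paths c2" using arms_cover q by blast
      then obtain k where "k \<in> bas (arm_rep c2) z" "arm_path c2 k = q"
        using arm_path_onto[OF arm2] \<open>start q = z\<close> by blast
      then show ?thesis by (intro bexI[of _ "2 * k + 1"]) (simp_all add: D_bas D_path_def arm_of_def)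
    qed
    then obtain t where "t \<in> bas D z" "D_path t = q" ..
    then show ?thesis using fun_cong[OF zero, of t] by (simp add: proj_app)
  next
    case False
    then show ?thesis using v idx_in_J_bas[OF q(1)] by (simp add: space_def)
  qed
qed

lemma proj_emb: "app J D proj z (app M J emb z m) = (\<lambda>_. 0)"
  using D_path_props emb_support by (simp add: proj_app fun_eq_iff)

lemma proj_surj:
  assumes d: "d \<in> space D z"
  shows "\<exists>w\<in>space J z. app J D proj z w = d"
proof
  define w where "w = (\<lambda>l. \<Sum>t\<in>bas D z. d t * unit_vec (idx (D_path t)) l)"
  show "w \<in> space J z"
    unfolding w_def using D_path_props idx_in_J_bas
    by (intro space_sum space_scale unit_vec_in_space) simp
  show "app J D proj z w = d"
  proof
    fix t'
    show "app J D proj z w t' = d t'"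
    proof (cases "t' \<in> bas D z")
      case True
      have "w (idx (D_path t')) = (\<Sum>t\<in>bas D z. if t = t' then d t' else 0)"
        unfolding w_def
      proof (rule sum.cong)
        fix t
        assume t: "t \<in> bas D z"
        have "idx (D_path t) = idx (D_path t') \<longleftrightarrow> t = t'"
          using idx_eq_iff[OF D_path_props(1)[OF t] D_path_props(1)[OF True]] D_path_inj[OF t True]
          by auto
        then show "d t * unit_vec (idx (D_path t)) (idx (D_path t')) = (if t = t' then d t' else 0)"
          by (auto simp: unit_vec_def)
      qed simp
      also have "\<dots> = d t'" using True finite_D_bas by (simp add: sum.delta')
      finally show ?thesis using True by (simp add: proj_app)
    qed (use d in \<open>simp add: proj_app space_def\<close>)
  qed
qed

lemma proj_epi: "hom_epi Q J D proj"
  unfolding hom_epi_def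
proof (intro ballI equalityI subsetI)
  fix z d
  assume "d \<in> space D z"
  then obtain w where "w \<in> space J z" "app J D proj z w = d" using proj_surj by blast
  then show "d \<in> app J D proj z ` space J z" by blast
qed (auto simp: app_in_space)

definition toD :: "'q \<Rightarrow> nat \<Rightarrow> nat \<Rightarrow> 'k" where
  "toD = hom_comp J proj toJ"

lemma toD_kernel:
  assumes x: "x \<in> verts Q" and e: "e \<in> space E x"
  shows "app E C p x e = (\<lambda>_. 0) \<longleftrightarrow> app E D toD x e = (\<lambda>_. 0)"
proof -
  have K: "app E C p x e = (\<lambda>_. 0) \<longleftrightarrow> e \<in> app M E i x ` space M x"
    using bspec[OF p_kernel x] e by blast
  show ?thesis
  proof
    assume "app E C p x e = (\<lambda>_. 0)"
    then obtain m where "m \<in> space M x" "e = app M E i x m" using K by blast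
    then show "app E D toD x e = (\<lambda>_. 0)" by (simp add: toD_def app_hom_comp toJ_i proj_emb)
  next
    assume "app E D toD x e = (\<lambda>_. 0)"
    then have "app J D proj x (app E J toJ x e) = (\<lambda>_. 0)" by (simp add: toD_def app_hom_comp)
    then have "\<forall>q\<in>P. q \<notin> suffixes \<longrightarrow> app E J toJ x e (idx q) = 0"
      by (rule proj_kernel[OF app_in_space])
    then obtain m where m: "m \<in> space M x" "app M J emb x m = app E J toJ x e"
      using emb_image[OF x app_in_space] by blast
    have "app E J toJ x (app M E i x m) = app E J toJ x e" using toJ_i[OF m(1)] m(2) by simp
    moreover have "inj_on (app E J toJ x) (space E x)" using toJ_mono x by (simp add: hom_mono_def)
    moreover have "app M E i x m \<in> space E x" by (rule app_in_space)
    ultimately have "e = app M E i x m" using e by (simp add: inj_on_def)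
    then show "app E C p x e = (\<lambda>_. 0)" using K m(1) by blast
  qed
qed

lemma C_isomorphic_D: "isomorphic Q C D"
proof (rule isomorphic_if_epis_same_kernel[OF _ _ p_hom p_epi])
  show "is_hom Q E D toD" unfolding toD_def by (rule is_hom_comp[OF toJ_hom proj_hom])
  show "hom_epi Q E D toD" unfolding toD_def by (rule hom_epi_comp[OF toJ_epi proj_epi])
  show "\<And>a. a \<in> arrs Q \<Longrightarrow> src Q a \<in> verts Q \<and> tgt Q a \<in> verts Q"
    using src_in_verts tgt_in_verts by blast
  show "\<And>x. finite (bas C x)" using C_is_rep by (simp add: is_rep_def)
qed (rule toD_kernel)

end

theorem lemma3p3:
  fixes Q :: "('q,'a) quiver" and R :: "'a list set"
    and M E C :: "('q,'a,'k::field) rep"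
    and i p :: "'q \<Rightarrow> nat \<Rightarrow> nat \<Rightarrow> 'k"
  assumes "string_algebra Q R"
    and "is_rep Q R M"
    and "directed_string_module Q R M"
    and "injective_envelope Q R M E i"
    and "is_rep Q R C"
    and "is_hom Q E C p"
    and "hom_epi Q E C p"
    and "\<forall>x\<in>verts Q. {v \<in> space E x. app E C p x v = (\<lambda>_. 0)} = app M E i x ` space M x"
  shows "\<exists>D1 D2. is_rep Q R D1 \<and> is_rep Q R D2 \<and> isomorphic Q C (dsum D1 D2)
           \<and> (zero_rep Q D1 \<or> directed_string_module Q R D1)
           \<and> (zero_rep Q D2 \<or> directed_string_module Q R D2)"
proof -
  interpret string_alg Q R by (rule string_alg.intro) fact
  obtain x0 pth T where pth: "is_path Q x0 pth" "pth \<notin> R"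
    and T: "is_hom Q M (string_rep Q x0 pth) T" "hom_mono Q M (string_rep Q x0 pth) T"
      "hom_epi Q M (string_rep Q x0 pth) T"
    using assms(3) unfolding directed_string_module_def isomorphic_def by blast
  define y where "y = path_end Q x0 pth"
  obtain idx :: "'a list \<Rightarrow> nat" where idx: "inj_on idx (paths_to Q R y)"
    using finite_imp_inj_to_nat_seg[OF finite_paths_to] by blast
  interpret suffix_embedding Q R y idx "inj_model Q R y idx :: ('q,'a,'k) rep" x0 pth
    by unfold_locales (use pth idx path_end_in_verts in \<open>auto simp: y_def\<close>)
  interpret envelope Q R y idx "inj_model Q R y idx" x0 pth M E i T
    by unfold_locales (use assms(2,4) T in auto)
  obtain c1 c2 where arms: "is_arm c1" "is_arm c2" "P - suffixes = arm_paths c1 \<union> arm_paths c2"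
    "arm_paths c1 \<inter> arm_paths c2 = {}"
    using two_arms by blast
  interpret cokernel Q R y idx "inj_model Q R y idx" x0 pth M E i T C p c1 c2
    by unfold_locales (use assms(5-8) arms in auto)
  show ?thesis
    using arm_rep_is_rep[OF arm1] arm_rep_is_rep[OF arm2] C_isomorphic_D
      arm_rep_directed[OF arm1] arm_rep_directed[OF arm2] by blast
qed

end
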